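(* Let $\alpha=(\alpha_n)_{n\in\mathbb{N}}\in\ell^2$ and let $f_\alpha(z)=\sum_{n\ge0}\alpha_n z^n$. The following statements are equivalent: (i) the Rhaly operator $R_\alpha$, $(R_\alpha f)(k)=\alpha_k\sum_{j=0}^k f(j)$, is compact on $\ell^2$; (ii) $f_\alpha$ belongs to $\lambda^2_{1/2}$; (iii) $\displaystyle\lim_{n\to\infty} 2^n\sum_{j=2^n}^{2^{n+1}-1}|\alpha_j|^2=0$.
   Context: $\mathbb{N}=\{0,1,2,\dots\}$; $\ell^2$ is the Hilbert space of square-summable functions $f:\mathbb{N}\to\mathbb{C}$. For $\alpha\in\ell^2$, $f_\alpha\in H^2$ (Hardy space of the unit disc), identified with its boundary function on $\mathbb{T}$. The small mean Lipschitz space is $\lambda^2_{1/2}=\{f\in L^2(\mathbb{T}): \sup_{t}|t|^{-1/2}\|f_t-f\|_{L^2}<\infty \text{ and } \lim_{t\to0}|t|^{-1/2}\|f_t-f\|_{L^2}=0\}$, where $f_t(e^{i\theta})=f(e^{i(\theta-t)})$. *)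

theory Defs
  imports "HOL-Analysis.Analysis"
begin

definition ell2 :: "(nat \<Rightarrow> complex) set" where
  "ell2 = {f. summable (\<lambda>n. (cmod (f n))\<^sup>2)}"

definition ell2_norm :: "(nat \<Rightarrow> complex) \<Rightarrow> real" where
  "ell2_norm f = sqrt (\<Sum>n. (cmod (f n))\<^sup>2)"

definition rhaly :: "(nat \<Rightarrow> complex) \<Rightarrow> (nat \<Rightarrow> complex) \<Rightarrow> (nat \<Rightarrow> complex)" where
  "rhaly \<alpha> f = (\<lambda>k. \<alpha> k * (\<Sum>j\<le>k. f j))"

text \<open>A (linear) map T is a compact operator on l^2: it maps l^2 into l^2 and maps
  bounded sequences to sequences having an l^2-norm convergent subsequence
  (i.e. images of bounded sets are relatively compact).\<close>
definition compact_op_ell2 :: "((nat \<Rightarrow> complex) \<Rightarrow> (nat \<Rightarrow> complex)) \<Rightarrow> bool" where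
  "compact_op_ell2 T \<longleftrightarrow>
     (\<forall>x\<in>ell2. T x \<in> ell2) \<and>
     (\<forall>X (B::real). (\<forall>m. X m \<in> ell2 \<and> ell2_norm (X m) \<le> B) \<longrightarrow>
        (\<exists>(r::nat\<Rightarrow>nat) y. strict_mono r \<and> y \<in> ell2 \<and>
               (\<lambda>m. ell2_norm (T (X (r m)) - y)) \<longlonglongrightarrow> 0))"

text \<open>Functions on the unit circle are represented as 2pi-periodic functions of the angle.
  L^2(T): measurable periodic functions with square integrable modulus on [0,2pi].\<close>
definition L2T :: "(real \<Rightarrow> complex) set" where
  "L2T = {h. h \<in> borel_measurable lborel \<and> (\<forall>\<theta>. h (\<theta> + 2*pi) = h \<theta>) \<and>
             set_integrable lborel {0..2*pi} (\<lambda>\<theta>. (cmod (h \<theta>))\<^sup>2)}"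

definition L2T_norm :: "(real \<Rightarrow> complex) \<Rightarrow> real" where
  "L2T_norm h = sqrt ((LINT \<theta>:{0..2*pi}|lborel. (cmod (h \<theta>))\<^sup>2) / (2*pi))"

text \<open>g is the boundary function of f_alpha = sum alpha_n z^n: the partial sums
  sum_{n<N} alpha_n e^{i n theta} converge to g in L^2(T).\<close>
definition boundary_fun :: "(nat \<Rightarrow> complex) \<Rightarrow> (real \<Rightarrow> complex) \<Rightarrow> bool" where
  "boundary_fun \<alpha> g \<longleftrightarrow> g \<in> L2T \<and>
     (\<lambda>N. L2T_norm (\<lambda>\<theta>. g \<theta> - (\<Sum>n<N. \<alpha> n * exp (\<i> * of_nat n * of_real \<theta>))))
       \<longlonglongrightarrow> 0"

text \<open>Small mean Lipschitz space lambda^2_{1/2}; the translate f_t is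
  f_t(e^{i theta}) = f(e^{i(theta - t)}).\<close>
definition small_mean_lip :: "(real \<Rightarrow> complex) set" where
  "small_mean_lip = {f. f \<in> L2T \<and>
     (\<exists>C. \<forall>t. t \<noteq> 0 \<longrightarrow> L2T_norm (\<lambda>\<theta>. f (\<theta> - t) - f \<theta>) / sqrt \<bar>t\<bar> \<le> C) \<and>
     ((\<lambda>t. L2T_norm (\<lambda>\<theta>. f (\<theta> - t) - f \<theta>) / sqrt \<bar>t\<bar>) \<longlongrightarrow> 0) (at 0)}"

end

theory Submission
  imports Defs
begin

text \<open>Put \<open>a n = |\<alpha> n|\<^sup>2\<close> and \<open>\<tau> k = \<Sum>n\<ge>k. a n\<close>. All three conditions are equivalent to
  \<open>(k + 1) \<tau> k \<rightarrow> 0\<close>, which is equivalent to (iii) because \<open>\<tau> (2^m)\<close> is comparable with the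
  dyadic blocks beyond \<open>2^m\<close>.

  A discrete Hardy inequality bounds \<open>\<parallel>R\<^sub>\<alpha> f\<parallel>\<^sup>2\<close> by \<open>4 (sup\<^sub>k (k + 1) \<tau> k) \<parallel>f\<parallel>\<^sup>2\<close>.
  Under the decay condition, this bound for the tail of \<open>\<alpha>\<close> together with coordinatewise
  convergence of a subsequence of a bounded sequence gives compactness. Conversely,
  \<open>R\<^sub>\<alpha>\<close> maps the normalised indicators of the dyadic blocks, which tend to 0
  coordinatewise, to vectors whose squared norms dominate \<open>2^n\<close> times the next block.

  For (ii), the boundary function exists by the Riesz--Fischer argument, and Parseval's identity
  gives \<open>\<parallel>f\<^sub>t - f\<parallel>\<^sup>2 = \<Sum>n. a n (2 - 2 cos (n t))\<close>. Taking \<open>t = 2^-m\<close> bounds the \<open>m\<close>-th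
  dyadic block, while splitting the sum at \<open>n \<approx> 1/|t|\<close> and summing by parts shows
  \<open>\<parallel>f\<^sub>t - f\<parallel>\<^sup>2 = o(|t|)\<close> under the decay condition.\<close>

section \<open>Tail sums and dyadic blocks\<close>

definition tail_sum :: "(nat \<Rightarrow> real) \<Rightarrow> nat \<Rightarrow> real" where
  "tail_sum a k = (\<Sum>i. a (i + k))"

lemma tail_sum_eq:
  assumes "summable a"
  shows "tail_sum a k = suminf a - (\<Sum>i<k. a i)"
  unfolding tail_sum_def using suminf_split_initial_segment[OF assms, of k] by simp

lemma tail_sum_split:
  assumes "summable a" "i \<le> j"
  shows "tail_sum a i = (\<Sum>n\<in>{i..<j}. a n) + tail_sum a j"
proof -
  have "(\<Sum>n<j. a n) = (\<Sum>n<i. a n) + (\<Sum>n\<in>{i..<j}. a n)"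
    using assms(2) by (metis atLeast0LessThan le0 sum.atLeastLessThan_concat)
  then show ?thesis by (simp add: tail_sum_eq[OF assms(1)])
qed

lemma tail_sum_Suc:
  assumes "summable a"
  shows "tail_sum a k = a k + tail_sum a (Suc k)"
  using tail_sum_split[OF assms, of k "Suc k"] by simp

lemma tail_sum_nonneg:
  assumes "summable a" "\<And>k. a k \<ge> 0"
  shows "tail_sum a k \<ge> 0"
  unfolding tail_sum_def
  by (rule suminf_nonneg) (use summable_ignore_initial_segment[OF assms(1), of k] assms(2) in auto)

lemma sum_le_tail_sum:
  assumes "summable a" "\<And>k. a k \<ge> 0"
  shows "(\<Sum>n\<in>{i..<j}. a n) \<le> tail_sum a i"
proof (cases "i \<le> j")
  case True
  then show ?thesis using tail_sum_split[OF assms(1) True] tail_sum_nonneg[OF assms] by simp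
qed (use tail_sum_nonneg[OF assms] in simp)

lemma tail_sum_antimono:
  assumes "summable a" "\<And>k. a k \<ge> 0" "i \<le> j"
  shows "tail_sum a j \<le> tail_sum a i"
  using tail_sum_split[OF assms(1,3)] assms(2) by (simp add: sum_nonneg)

lemma tail_sum_tendsto_0:
  assumes "summable a"
  shows "tail_sum a \<longlonglongrightarrow> 0"
proof -
  have "(\<lambda>k. suminf a - (\<Sum>i<k. a i)) \<longlonglongrightarrow> suminf a - suminf a"
    by (intro tendsto_intros summable_LIMSEQ[OF assms])
  moreover have "tail_sum a = (\<lambda>k. suminf a - (\<Sum>i<k. a i))"
    using tail_sum_eq[OF assms] by blast
  ultimately show ?thesis by simp
qed

lemma tail_sum_truncate:
  assumes "summable a"
  shows "tail_sum (\<lambda>k. if N \<le> k then a k else 0) k = tail_sum a (max k N)"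
proof -
  define b where "b = (\<lambda>k. if N \<le> k then a k else 0)"
  have "summable b"
    unfolding b_def using summable_ignore_initial_segment[OF assms, of N]
    by (subst summable_iff_shift[symmetric, of _ N]) simp
  then have "tail_sum b k = (\<Sum>n\<in>{k..<max k N}. b n) + tail_sum b (max k N)"
    by (rule tail_sum_split) simp
  also have "(\<Sum>n\<in>{k..<max k N}. b n) = 0" unfolding b_def by (intro sum.neutral) auto
  also have "tail_sum b (max k N) = tail_sum a (max k N)"
    unfolding b_def tail_sum_def by (rule arg_cong[where f=suminf]) auto
  finally show ?thesis unfolding b_def by simp
qed

lemma summation_by_parts:
  fixes s \<tau> :: "nat \<Rightarrow> 'a::comm_ring"
  assumes "j \<le> K"
  shows "(\<Sum>k\<in>{j..<K}. (\<tau> k - \<tau> (Suc k)) * s k) + s K * \<tau> K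
         = s j * \<tau> j + (\<Sum>k\<in>{j..<K}. (s (Suc k) - s k) * \<tau> (Suc k))"
  using assms
proof (induction K)
  case (Suc K)
  show ?case
  proof (cases "j = Suc K")
    case False
    with Suc have "j \<le> K" by simp
    with Suc.IH show ?thesis by (simp add: algebra_simps)
  qed simp
qed simp

definition dyadic_block :: "(nat \<Rightarrow> real) \<Rightarrow> nat \<Rightarrow> real" where
  "dyadic_block a n = (\<Sum>j\<in>{2^n..<2^(n+1)}. a j)"

lemma sum_dyadic_blocks:
  assumes "m \<le> M"
  shows "(\<Sum>j\<in>{2^m..<2^M}. a j) = (\<Sum>n\<in>{m..<M}. dyadic_block a n)"
  using assms
proof (induction M)
  case (Suc M)
  show ?case
  proof (cases "m = Suc M")
    case False
    with Suc have "m \<le> M" by simp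
    have "(\<Sum>j\<in>{2^m..<2^Suc M}. a j) = (\<Sum>j\<in>{2^m..<2^M}. a j) + dyadic_block a M"
      unfolding dyadic_block_def using \<open>m \<le> M\<close>
      by (simp add: sum.atLeastLessThan_concat power_increasing)
    with Suc.IH[OF \<open>m \<le> M\<close>] \<open>m \<le> M\<close> show ?thesis by simp
  qed simp
qed simp

lemma dyadic_decay_if_tail_decay:
  assumes "summable a" "\<And>k. a k \<ge> 0"
    and "(\<lambda>k. (real k + 1) * tail_sum a k) \<longlonglongrightarrow> 0"
  shows "(\<lambda>n. 2 ^ n * dyadic_block a n) \<longlonglongrightarrow> 0"
proof (rule tendsto_sandwich[where f="\<lambda>_. 0"])
  have "strict_mono (\<lambda>n::nat. (2::nat) ^ n)"
    by (simp add: strict_mono_def power_strict_increasing)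
  from LIMSEQ_subseq_LIMSEQ[OF assms(3) this]
  show "(\<lambda>n. (real (2^n) + 1) * tail_sum a (2^n)) \<longlonglongrightarrow> 0" by (simp add: o_def)
  have "2 ^ n * dyadic_block a n \<le> (real (2^n) + 1) * tail_sum a (2^n)" for n
    using sum_le_tail_sum[OF assms(1,2), of "2^n" "2^(n+1)"] assms(2)
    unfolding dyadic_block_def by (intro mult_mono) (auto simp: sum_nonneg)
  then show "\<forall>\<^sub>F n in sequentially. 2 ^ n * dyadic_block a n \<le> (real (2^n) + 1) * tail_sum a (2^n)"
    by simp
  show "\<forall>\<^sub>F n in sequentially. 0 \<le> 2 ^ n * dyadic_block a n"
    unfolding dyadic_block_def using assms(2) by (simp add: sum_nonneg)
qed simp

lemma tail_sum_pow2_le: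
  assumes "summable a" "\<And>k. a k \<ge> 0" and block: "\<And>n. n \<ge> m \<Longrightarrow> dyadic_block a n \<le> \<delta> * (1/2)^n"
  shows "tail_sum a (2^m) \<le> 2 * \<delta> * (1/2)^m"
proof (rule LIMSEQ_le_const)
  have "strict_mono (\<lambda>M::nat. (2::nat) ^ M)"
    by (simp add: strict_mono_def power_strict_increasing)
  from LIMSEQ_subseq_LIMSEQ[OF tail_sum_tendsto_0[OF assms(1)] this]
  have "(\<lambda>M. tail_sum a (2^M)) \<longlonglongrightarrow> 0" by (simp add: o_def)
  then have "(\<lambda>M. 2 * \<delta> * (1/2)^m + tail_sum a (2^M)) \<longlonglongrightarrow> 2 * \<delta> * (1/2)^m + 0"
    by (intro tendsto_add tendsto_const)
  then show "(\<lambda>M. 2 * \<delta> * (1/2)^m + tail_sum a (2^M)) \<longlonglongrightarrow> 2 * \<delta> * (1/2)^m"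
    by simp
  have "tail_sum a (2^m) \<le> 2 * \<delta> * (1/2)^m + tail_sum a (2^M)" if "M \<ge> m" for M
  proof -
    have "(\<Sum>n\<in>{m..<M}. (1/2::real)^n) = (\<Sum>n\<in>{m..<M}. 2 * (1/2)^n - 2 * (1/2)^Suc n)"
      by simp
    also have "\<dots> = 2 * (1/2)^m - 2 * (1/2)^M"
      using sum_Suc_diff'[OF that, of "\<lambda>n. - 2 * (1/2::real)^n"] by simp
    finally have "(\<Sum>n\<in>{m..<M}. (1/2::real)^n) = 2 * (1/2)^m - 2 * (1/2)^M" .
    moreover have "0 \<le> \<delta> * (1/2)^m"
      using block[of m] assms(2) sum_nonneg[of "{2^m..<2^(m+1)}" a] by (simp add: dyadic_block_def)
    then have "\<delta> \<ge> 0" using mult_neg_pos[of \<delta> "(1/2::real)^m"] by force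
    then have "0 \<le> \<delta> * (2 * (1/2::real)^M)" by simp
    ultimately have geom: "(\<Sum>n\<in>{m..<M}. \<delta> * (1/2::real)^n) \<le> 2 * \<delta> * (1/2)^m"
      by (simp add: sum_distrib_left[symmetric] right_diff_distrib)
    have "tail_sum a (2^m) = (\<Sum>n\<in>{m..<M}. dyadic_block a n) + tail_sum a (2^M)"
      using tail_sum_split[OF assms(1), of "2^m" "2^M"] that
      by (simp add: power_increasing sum_dyadic_blocks)
    also have "(\<Sum>n\<in>{m..<M}. dyadic_block a n) \<le> (\<Sum>n\<in>{m..<M}. \<delta> * (1/2)^n)"
      by (rule sum_mono) (simp add: block)
    finally show ?thesis using geom by linarith
  qed
  then show "\<exists>N. \<forall>M\<ge>N. tail_sum a (2^m) \<le> 2 * \<delta> * (1/2)^m + tail_sum a (2^M)" by blast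
qed

lemma tail_decay_if_dyadic_decay:
  assumes sa: "summable a" and a0: "\<And>k. a k \<ge> 0"
    and D: "(\<lambda>n. 2 ^ n * dyadic_block a n) \<longlonglongrightarrow> 0"
  shows "(\<lambda>k. (real k + 1) * tail_sum a k) \<longlonglongrightarrow> 0"
proof (rule LIMSEQ_I)
  fix e :: real assume "e > 0"
  then obtain m0 where m0: "\<And>n. n \<ge> m0 \<Longrightarrow> \<bar>2 ^ n * dyadic_block a n\<bar> < e / 8"
    using LIMSEQ_D[OF D, of "e / 8"] by auto
  have "dyadic_block a n \<le> e / 8 * (1/2)^n" if "n \<ge> m0" for n
    using m0[OF that] by (simp add: power_one_over field_simps)
  then have tail_pow2: "tail_sum a (2^m) \<le> e / 4 * (1/2)^m" if "m \<ge> m0" for m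
    using tail_sum_pow2_le[OF sa a0, of m "e / 8"] that by simp
  show "\<exists>no. \<forall>k\<ge>no. norm ((real k + 1) * tail_sum a k - 0) < e"
  proof (intro exI allI impI)
    fix k :: nat assume k: "k \<ge> 2^m0"
    then have "k \<ge> 1" using one_le_power[of "2::nat" m0] by linarith
    then obtain m where m: "2^m \<le> k" "k < 2^(m+1)" using ex_power_ivl1[of 2 k] by auto
    with k have "(2::nat) ^ m0 < 2 ^ (m+1)" by linarith
    then have "m0 \<le> m" using power_less_imp_less_exp[of "2::nat" m0 "m+1"] by simp
    have "tail_sum a k \<le> e / 4 * (1/2)^m"
      using tail_sum_antimono[OF sa a0 m(1)] tail_pow2[OF \<open>m0 \<le> m\<close>] by linarith
    moreover have "real (k + 1) \<le> real (2^(m+1))"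
      using m(2) by (intro of_nat_mono) simp
    then have "real k + 1 \<le> 2^(m+1)" by simp
    ultimately have "(real k + 1) * tail_sum a k \<le> 2^(m+1) * (e / 4 * (1/2)^m)"
      using tail_sum_nonneg[OF sa a0, of k] by (intro mult_mono) auto
    also have "\<dots> = e / 2" by (simp add: power_one_over field_simps)
    finally have "(real k + 1) * tail_sum a k \<le> e / 2" .
    moreover have "norm ((real k + 1) * tail_sum a k - 0) = (real k + 1) * tail_sum a k"
      using tail_sum_nonneg[OF sa a0, of k] by simp
    ultimately show "norm ((real k + 1) * tail_sum a k - 0) < e" using \<open>e > 0\<close> by linarith
  qed
qed

section \<open>A discrete Hardy inequality\<close>

lemma sum_inverse_sqrt_le: "(\<Sum>j\<le>k. 1 / sqrt (real j + 1)) \<le> 2 * sqrt (real k + 1)"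
proof (induction k)
  case (Suc k)
  define u where "u = sqrt (real k + 1)"
  define v where "v = sqrt (real k + 2)"
  have "v > 0" unfolding v_def by simp
  have "u * u = real k + 1" "v * v = real k + 2" unfolding u_def v_def by simp_all
  moreover have "2 * u * v \<le> u * u + v * v" using sum_squares_bound[of u v] by (simp add: power2_eq_square)
  ultimately have "1 \<le> 2 * (v - u) * v" by (simp add: algebra_simps)
  with \<open>v > 0\<close> have "1 / v \<le> 2 * (v - u)" by (simp add: divide_le_eq)
  moreover have "sqrt (real (Suc k) + 1) = v" unfolding v_def by (simp add: add.commute)
  ultimately show ?case using Suc.IH unfolding u_def by simp
qed simp

text \<open>The weights \<open>sqrt (k + 1)\<close> are the Schur test functions for the Rhaly operator.\<close>

lemma sum_sqrt_weighted_le_tail_bound: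
  assumes sa: "summable a" and a0: "\<And>k. a k \<ge> 0"
    and eps: "\<And>k. (real k + 1) * tail_sum a k \<le> \<epsilon>"
  shows "(\<Sum>k\<in>{j..<K}. a k * sqrt (real k + 1)) \<le> 2 * \<epsilon> / sqrt (real j + 1)"
proof -
  define s where "s k = sqrt (real k + 1)" for k
  define \<tau> where "\<tau> = tail_sum a"
  have s0: "s k > 0" for k unfolding s_def by simp
  have t0: "\<tau> k \<ge> 0" for k unfolding \<tau>_def using tail_sum_nonneg[OF sa a0] .
  have e0: "\<epsilon> \<ge> 0" using eps[of 0] t0[of 0] unfolding \<tau>_def by simp
  have tb: "\<tau> k \<le> \<epsilon> / (s k)^2" for k
    using eps[of k] unfolding \<tau>_def s_def by (simp add: field_simps)
  show ?thesis
  proof (cases "j \<le> K")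
    case True
    have a_eq: "a k = \<tau> k - \<tau> (Suc k)" for k unfolding \<tau>_def using tail_sum_Suc[OF sa, of k] by simp
    have "s j * \<tau> j \<le> s j * (\<epsilon> / (s j)^2)" using tb[of j] s0[of j] by (intro mult_left_mono) auto
    then have head: "s j * \<tau> j \<le> \<epsilon> / s j" using s0[of j] by (simp add: power2_eq_square)
    have step: "(s (Suc k) - s k) * \<tau> (Suc k) \<le> \<epsilon> * (1 / s k - 1 / s (Suc k))" for k
    proof -
      have mono: "s k \<le> s (Suc k)" unfolding s_def by simp
      have "(s (Suc k) - s k) * \<tau> (Suc k) \<le> (s (Suc k) - s k) * (\<epsilon> / (s (Suc k) * s (Suc k)))"
        using tb[of "Suc k"] mono by (intro mult_left_mono) (auto simp: power2_eq_square)
      also have "\<dots> \<le> (s (Suc k) - s k) * (\<epsilon> / (s k * s (Suc k)))"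
        using mono s0[of k] e0 by (intro mult_left_mono divide_left_mono mult_right_mono) auto
      also have "\<dots> = \<epsilon> * (1 / s k - 1 / s (Suc k))"
        using s0[of k] s0[of "Suc k"] by (simp add: field_simps)
      finally show ?thesis .
    qed
    have "(\<Sum>k\<in>{j..<K}. a k * s k) \<le> (\<Sum>k\<in>{j..<K}. a k * s k) + s K * \<tau> K"
      using s0[of K] t0[of K] by simp
    also have "\<dots> = s j * \<tau> j + (\<Sum>k\<in>{j..<K}. (s (Suc k) - s k) * \<tau> (Suc k))"
      unfolding a_eq by (rule summation_by_parts[OF True])
    also have "(\<Sum>k\<in>{j..<K}. (s (Suc k) - s k) * \<tau> (Suc k)) \<le> (\<Sum>k\<in>{j..<K}. \<epsilon> * (1 / s k - 1 / s (Suc k)))"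
      by (rule sum_mono) (rule step)
    also have "\<dots> = \<epsilon> * (1 / s j - 1 / s K)"
      using sum_Suc_diff'[OF True, of "\<lambda>k. - (1 / s k)"] by (simp add: sum_distrib_left[symmetric])
    also have "\<dots> \<le> \<epsilon> / s j" using e0 s0[of K] by (simp add: right_diff_distrib)
    finally show ?thesis using head unfolding s_def by simp
  qed (use e0 in simp)
qed

lemma norm_partial_sum_sq_le:
  fixes f :: "nat \<Rightarrow> 'a::real_normed_vector"
  shows "(norm (\<Sum>j\<le>k. f j))\<^sup>2 \<le> 2 * sqrt (real k + 1) * (\<Sum>j\<le>k. (norm (f j))\<^sup>2 * sqrt (real j + 1))"
proof -
  define r where "r j = sqrt (sqrt (real j + 1))" for j
  have "r j \<noteq> 0" and rr: "(r j)^2 = sqrt (real j + 1)" for j unfolding r_def by simp_all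
  then have "(\<Sum>j\<le>k. (1 / r j) * (norm (f j) * r j)) = (\<Sum>j\<le>k. norm (f j))"
    by simp
  then have "(norm (\<Sum>j\<le>k. f j))\<^sup>2 \<le> (\<Sum>j\<le>k. (1 / r j) * (norm (f j) * r j))\<^sup>2"
    using norm_sum[of f "{..k}"] by (simp add: power_mono)
  also have "\<dots> \<le> (\<Sum>j\<le>k. (1 / r j)\<^sup>2) * (\<Sum>j\<le>k. (norm (f j) * r j)\<^sup>2)"
    by (rule Cauchy_Schwarz_ineq_sum)
  also have "\<dots> = (\<Sum>j\<le>k. 1 / sqrt (real j + 1)) * (\<Sum>j\<le>k. (norm (f j))\<^sup>2 * sqrt (real j + 1))"
    by (simp add: power_divide power_mult_distrib rr)
  also have "\<dots> \<le> 2 * sqrt (real k + 1) * (\<Sum>j\<le>k. (norm (f j))\<^sup>2 * sqrt (real j + 1))"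
    by (rule mult_right_mono[OF sum_inverse_sqrt_le]) (simp add: sum_nonneg)
  finally show ?thesis .
qed

lemma sum_triangle_swap:
  fixes g :: "nat \<Rightarrow> nat \<Rightarrow> 'a::comm_monoid_add"
  shows "(\<Sum>k<K. \<Sum>j\<le>k. g k j) = (\<Sum>j<K. \<Sum>k\<in>{j..<K}. g k j)"
proof -
  have "(\<Sum>k<K. \<Sum>j\<le>k. g k j) = (\<Sum>k<K. \<Sum>j\<in>{j. j \<in> {..<K} \<and> j \<le> k}. g k j)"
    by (intro sum.cong) auto
  also have "\<dots> = (\<Sum>j<K. \<Sum>k\<in>{k. k \<in> {..<K} \<and> j \<le> k}. g k j)"
    by (rule sum.swap_restrict) auto
  also have "\<dots> = (\<Sum>j<K. \<Sum>k\<in>{j..<K}. g k j)"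
    by (intro sum.cong) auto
  finally show ?thesis .
qed

lemma discrete_hardy_inequality:
  fixes f :: "nat \<Rightarrow> 'a::real_normed_vector"
  assumes sa: "summable a" and a0: "\<And>k. a k \<ge> 0"
    and eps: "\<And>k. (real k + 1) * tail_sum a k \<le> \<epsilon>"
    and sf: "summable (\<lambda>j. (norm (f j))\<^sup>2)"
  shows "(\<Sum>k<K. a k * (norm (\<Sum>j\<le>k. f j))\<^sup>2) \<le> 4 * \<epsilon> * (\<Sum>j. (norm (f j))\<^sup>2)"
proof -
  define s where "s k = sqrt (real k + 1)" for k
  define c where "c j = (norm (f j))\<^sup>2" for j
  have s0: "s k > 0" for k unfolding s_def by simp
  then have "s k \<noteq> 0" for k by (simp add: less_imp_neq[symmetric])
  have e0: "\<epsilon> \<ge> 0" using eps[of 0] tail_sum_nonneg[OF sa a0, of 0] by simp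
  have "(\<Sum>k<K. a k * (norm (\<Sum>j\<le>k. f j))\<^sup>2) \<le> (\<Sum>k<K. a k * (2 * s k * (\<Sum>j\<le>k. c j * s j)))"
    using norm_partial_sum_sq_le[of f] a0 unfolding s_def c_def by (intro sum_mono mult_left_mono) auto
  also have "\<dots> = 2 * (\<Sum>k<K. \<Sum>j\<le>k. c j * s j * (a k * s k))"
    by (simp add: sum_distrib_left sum_distrib_right algebra_simps)
  also have "(\<Sum>k<K. \<Sum>j\<le>k. c j * s j * (a k * s k)) = (\<Sum>j<K. \<Sum>k\<in>{j..<K}. c j * s j * (a k * s k))"
    by (rule sum_triangle_swap)
  also have "\<dots> = (\<Sum>j<K. c j * s j * (\<Sum>k\<in>{j..<K}. a k * s k))"
    by (simp add: sum_distrib_left)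
  also have "\<dots> \<le> (\<Sum>j<K. c j * s j * (2 * \<epsilon> / s j))"
    using sum_sqrt_weighted_le_tail_bound[OF sa a0 eps] s0 unfolding s_def c_def
    by (intro sum_mono mult_left_mono) (auto simp: less_imp_le)
  also have "\<dots> = 2 * \<epsilon> * (\<Sum>j<K. c j)"
    using \<open>\<And>k. s k \<noteq> 0\<close> by (simp add: sum_distrib_left mult_ac)
  also have "\<dots> \<le> 2 * \<epsilon> * (\<Sum>j. c j)"
    using sf e0 unfolding c_def by (intro mult_left_mono sum_le_suminf) auto
  finally show ?thesis unfolding c_def by simp
qed

section \<open>Compactness of the Rhaly operator\<close>

lemma ell2_norm_sq:
  assumes "f \<in> ell2"
  shows "(ell2_norm f)\<^sup>2 = (\<Sum>n. (cmod (f n))\<^sup>2)"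
  using assms unfolding ell2_def ell2_norm_def by (simp add: suminf_nonneg)

lemma norm_le_ell2_norm:
  assumes "f \<in> ell2"
  shows "cmod (f j) \<le> ell2_norm f"
proof -
  have "(cmod (f j))\<^sup>2 \<le> (\<Sum>n. (cmod (f n))\<^sup>2)"
    using assms sum_le_suminf[of "\<lambda>n. (cmod (f n))\<^sup>2" "{j}"] unfolding ell2_def by auto
  then show ?thesis unfolding ell2_norm_def by (metis real_sqrt_abs real_sqrt_le_mono abs_norm_cancel)
qed

lemma ell2_energy_le_if_norm_le:
  assumes "f \<in> ell2" "ell2_norm f \<le> B"
  shows "(\<Sum>n. (cmod (f n))\<^sup>2) \<le> B\<^sup>2"
proof -
  have "0 \<le> ell2_norm f" unfolding ell2_norm_def using assms(1) by (simp add: ell2_def suminf_nonneg)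
  then have "(ell2_norm f)\<^sup>2 \<le> B\<^sup>2" by (rule power_mono[OF assms(2)])
  then show ?thesis using ell2_norm_sq[OF assms(1)] by simp
qed

lemma norm_diff_sq_le:
  fixes x y :: "'a::real_normed_vector"
  shows "(norm (x - y))\<^sup>2 \<le> 2 * (norm x)\<^sup>2 + 2 * (norm y)\<^sup>2"
proof -
  have "(norm (x - y))\<^sup>2 \<le> (norm x + norm y)\<^sup>2"
    by (simp add: power_mono norm_triangle_ineq4)
  also have "\<dots> \<le> 2 * (norm x)\<^sup>2 + 2 * (norm y)\<^sup>2"
    using sum_squares_bound[of "norm x" "norm y"] by (simp add: power2_eq_square algebra_simps)
  finally show ?thesis .
qed

lemma ell2_diff:
  assumes "f \<in> ell2" "g \<in> ell2"
  shows "f - g \<in> ell2"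
    and "(\<Sum>n. (cmod ((f - g) n))\<^sup>2) \<le> 2 * (\<Sum>n. (cmod (f n))\<^sup>2) + 2 * (\<Sum>n. (cmod (g n))\<^sup>2)"
proof -
  have s: "summable (\<lambda>n. 2 * (cmod (f n))\<^sup>2 + 2 * (cmod (g n))\<^sup>2)"
    using assms unfolding ell2_def by (intro summable_add summable_mult) auto
  have le: "(cmod ((f - g) n))\<^sup>2 \<le> 2 * (cmod (f n))\<^sup>2 + 2 * (cmod (g n))\<^sup>2" for n
    using norm_diff_sq_le by simp
  have s2: "summable (\<lambda>n. (cmod ((f - g) n))\<^sup>2)"
    by (rule summable_comparison_test'[OF s]) (use le in auto)
  then show "f - g \<in> ell2" unfolding ell2_def by simp
  have "(\<Sum>n. (cmod ((f - g) n))\<^sup>2) \<le> (\<Sum>n. 2 * (cmod (f n))\<^sup>2 + 2 * (cmod (g n))\<^sup>2)"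
    by (rule suminf_le[OF le s2 s])
  also have "\<dots> = 2 * (\<Sum>n. (cmod (f n))\<^sup>2) + 2 * (\<Sum>n. (cmod (g n))\<^sup>2)"
    using assms unfolding ell2_def by (subst suminf_add[symmetric]) (auto simp: suminf_mult)
  finally show "(\<Sum>n. (cmod ((f - g) n))\<^sup>2) \<le> 2 * (\<Sum>n. (cmod (f n))\<^sup>2) + 2 * (\<Sum>n. (cmod (g n))\<^sup>2)" .
qed

text \<open>Hardy's inequality is applied only to the part of \<open>\<alpha>\<close> beyond \<open>N\<close>.\<close>

lemma rhaly_energy_le_head_tail:
  assumes "\<alpha> \<in> ell2" "f \<in> ell2"
    and tail: "\<And>k. k \<ge> N \<Longrightarrow> (real k + 1) * tail_sum (\<lambda>n. (cmod (\<alpha> n))\<^sup>2) k \<le> \<delta>"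
  shows "rhaly \<alpha> f \<in> ell2"
    and "(\<Sum>k. (cmod (rhaly \<alpha> f k))\<^sup>2) \<le> (\<Sum>k<N. (cmod (rhaly \<alpha> f k))\<^sup>2) + 4 * \<delta> * (\<Sum>j. (cmod (f j))\<^sup>2)"
proof -
  define a where "a n = (cmod (\<alpha> n))\<^sup>2" for n
  define aN where "aN k = (if N \<le> k then a k else 0)" for k
  define c where "c k = (cmod (rhaly \<alpha> f k))\<^sup>2" for k
  have sa: "summable a" using assms(1) unfolding ell2_def a_def by simp
  have a0: "a k \<ge> 0" for k unfolding a_def by simp
  have saN: "summable aN"
    unfolding aN_def by (rule summable_comparison_test'[OF sa]) (use a0 in auto)
  have aN0: "aN k \<ge> 0" for k unfolding aN_def using a0 by simp
  have trunc: "tail_sum aN k = tail_sum a (max k N)" for k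
    unfolding aN_def by (rule tail_sum_truncate[OF sa])
  have tail_N: "(real k + 1) * tail_sum aN k \<le> \<delta>" for k
  proof (cases "N \<le> k")
    case True
    then show ?thesis using tail[of k] unfolding trunc by (simp add: a_def[abs_def])
  next
    case False
    then have "(real k + 1) * tail_sum a N \<le> (real N + 1) * tail_sum a N"
      using tail_sum_nonneg[OF sa a0, of N] by (intro mult_right_mono) auto
    with False show ?thesis using tail[of N] unfolding trunc by (simp add: a_def[abs_def])
  qed
  have c_split: "c k = (if k < N then c k else 0) + aN k * (cmod (\<Sum>j\<le>k. f j))\<^sup>2" for k
    unfolding c_def aN_def a_def rhaly_def by (simp add: norm_mult power_mult_distrib)
  have partial: "(\<Sum>k<K. c k) \<le> (\<Sum>k<N. c k) + 4 * \<delta> * (\<Sum>j. (cmod (f j))\<^sup>2)" for K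
  proof -
    have "(\<Sum>k<K. c k) = (\<Sum>k\<in>{..<K} \<inter> {..<N}. c k) + (\<Sum>k<K. aN k * (cmod (\<Sum>j\<le>k. f j))\<^sup>2)"
      by (subst c_split) (simp add: sum.distrib sum.inter_restrict lessThan_def)
    also have "(\<Sum>k\<in>{..<K} \<inter> {..<N}. c k) \<le> (\<Sum>k<N. c k)"
      by (rule sum_mono2) (auto simp: c_def)
    also have "(\<Sum>k<K. aN k * (cmod (\<Sum>j\<le>k. f j))\<^sup>2) \<le> 4 * \<delta> * (\<Sum>j. (cmod (f j))\<^sup>2)"
      by (rule discrete_hardy_inequality[OF saN aN0 tail_N]) (use assms(2) in \<open>simp add: ell2_def\<close>)
    finally show ?thesis by simp
  qed
  have "summable c" by (rule summableI_nonneg_bounded[OF _ partial]) (simp add: c_def)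
  then show "rhaly \<alpha> f \<in> ell2" by (simp add: c_def[abs_def] ell2_def)
  show "(\<Sum>k. (cmod (rhaly \<alpha> f k))\<^sup>2) \<le> (\<Sum>k<N. (cmod (rhaly \<alpha> f k))\<^sup>2) + 4 * \<delta> * (\<Sum>j. (cmod (f j))\<^sup>2)"
    using suminf_le_const[OF \<open>summable c\<close> partial] unfolding c_def .
qed

lemma rhaly_energy_tendsto_0:
  assumes "\<alpha> \<in> ell2"
    and decay: "(\<lambda>k. (real k + 1) * tail_sum (\<lambda>n. (cmod (\<alpha> n))\<^sup>2) k) \<longlonglongrightarrow> 0"
    and z: "\<And>m. z m \<in> ell2" "\<And>m. (\<Sum>n. (cmod (z m n))\<^sup>2) \<le> C"
    and coord: "\<And>j. (\<lambda>m. z m j) \<longlonglongrightarrow> 0"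
  shows "(\<lambda>m. \<Sum>k. (cmod (rhaly \<alpha> (z m) k))\<^sup>2) \<longlonglongrightarrow> 0"
proof (rule LIMSEQ_I)
  fix e :: real assume "e > 0"
  have "C \<ge> 0" using z(2)[of 0] suminf_nonneg[of "\<lambda>n. (cmod (z 0 n))\<^sup>2"] z(1)[of 0]
    unfolding ell2_def by auto
  define \<delta> where "\<delta> = e / (8 * C + 1)"
  have "\<delta> > 0" unfolding \<delta>_def using \<open>e > 0\<close> \<open>C \<ge> 0\<close> by simp
  have "4 * \<delta> * C < e / 2"
    unfolding \<delta>_def using \<open>e > 0\<close> \<open>C \<ge> 0\<close> by (simp add: field_simps)
  obtain N where N: "\<And>k. k \<ge> N \<Longrightarrow> \<bar>(real k + 1) * tail_sum (\<lambda>n. (cmod (\<alpha> n))\<^sup>2) k\<bar> < \<delta>"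
    using LIMSEQ_D[OF decay \<open>\<delta> > 0\<close>] by auto
  have tail: "(real k + 1) * tail_sum (\<lambda>n. (cmod (\<alpha> n))\<^sup>2) k \<le> \<delta>" if "k \<ge> N" for k
    using N[OF that] by (simp add: abs_less_iff)
  have "(\<lambda>m. \<Sum>k<N. (cmod (rhaly \<alpha> (z m) k))\<^sup>2) \<longlonglongrightarrow> (\<Sum>k<N. (cmod (\<alpha> k * (\<Sum>j\<le>k. 0)))\<^sup>2)"
    unfolding rhaly_def by (intro tendsto_intros coord)
  then have "(\<lambda>m. \<Sum>k<N. (cmod (rhaly \<alpha> (z m) k))\<^sup>2) \<longlonglongrightarrow> 0" by simp
  from LIMSEQ_D[OF this, of "e / 2"] \<open>e > 0\<close>
  obtain M where M: "\<And>m. m \<ge> M \<Longrightarrow> \<bar>\<Sum>k<N. (cmod (rhaly \<alpha> (z m) k))\<^sup>2\<bar> < e / 2"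
    by auto
  show "\<exists>M. \<forall>m\<ge>M. norm ((\<Sum>k. (cmod (rhaly \<alpha> (z m) k))\<^sup>2) - 0) < e"
  proof (intro exI allI impI)
    fix m assume "m \<ge> M"
    have "(\<Sum>k. (cmod (rhaly \<alpha> (z m) k))\<^sup>2)
        \<le> (\<Sum>k<N. (cmod (rhaly \<alpha> (z m) k))\<^sup>2) + 4 * \<delta> * (\<Sum>j. (cmod (z m j))\<^sup>2)"
      by (rule rhaly_energy_le_head_tail(2)[OF assms(1) z(1) tail])
    also have "\<dots> < e / 2 + e / 2"
    proof -
      have "4 * \<delta> * (\<Sum>j. (cmod (z m j))\<^sup>2) \<le> 4 * \<delta> * C"
        using z(2)[of m] \<open>\<delta> > 0\<close> by (intro mult_left_mono) auto
      then show ?thesis using M[OF \<open>m \<ge> M\<close>] \<open>4 * \<delta> * C < e / 2\<close> by (auto simp: abs_less_iff)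
    qed
    finally show "norm ((\<Sum>k. (cmod (rhaly \<alpha> (z m) k))\<^sup>2) - 0) < e"
      using rhaly_energy_le_head_tail(1)[OF assms(1) z(1) tail]
      by (simp add: suminf_nonneg ell2_def)
  qed
qed

lemma ell2_bounded_imp_coordinatewise_convergent_subseq:
  fixes X :: "nat \<Rightarrow> nat \<Rightarrow> complex"
  assumes X: "\<And>m. X m \<in> ell2" "\<And>m. ell2_norm (X m) \<le> B"
  obtains r l where "strict_mono r" "l \<in> ell2" "(\<Sum>j. (cmod (l j))\<^sup>2) \<le> B\<^sup>2"
    "\<And>j. (\<lambda>m. X (r m) j) \<longlonglongrightarrow> l j"
proof -
  define S where "S = Pi\<^sub>E (UNIV::nat set) (\<lambda>_. cball (0::complex) B)"
  have "compactin (product_topology (\<lambda>_. euclidean) UNIV) S"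
    unfolding S_def by (simp add: compactin_PiE)
  then have "compact S" by (simp add: euclidean_product_topology)
  then have "seq_compact S" by (rule compact_imp_seq_compact)
  have "cmod (X m j) \<le> B" for m j
    using norm_le_ell2_norm[OF X(1), of m j] X(2)[of m] by linarith
  then have "\<forall>m. X m \<in> S" unfolding S_def by (auto simp: PiE_iff)
  with \<open>seq_compact S\<close> obtain l r where "l \<in> S" "strict_mono r" "(X \<circ> r) \<longlonglongrightarrow> l"
    by (rule seq_compactE)
  have coord: "(\<lambda>m. X (r m) j) \<longlonglongrightarrow> l j" for j
  proof -
    have "continuous_on UNIV (\<lambda>x::nat\<Rightarrow>complex. x j)" by simp
    then have "isCont (\<lambda>x::nat\<Rightarrow>complex. x j) l"
      using continuous_on_eq_continuous_at[OF open_UNIV] by blast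
    from isCont_tendsto_compose[OF this \<open>(X \<circ> r) \<longlonglongrightarrow> l\<close>] show ?thesis by (simp add: o_def)
  qed
  have energy_X: "(\<Sum>j<J. (cmod (X m j))\<^sup>2) \<le> B\<^sup>2" for m J
  proof -
    have "(\<Sum>j<J. (cmod (X m j))\<^sup>2) \<le> (\<Sum>j. (cmod (X m j))\<^sup>2)"
      using X(1)[of m] unfolding ell2_def by (intro sum_le_suminf) auto
    also have "\<dots> \<le> B\<^sup>2" by (rule ell2_energy_le_if_norm_le[OF X(1,2)])
    finally show ?thesis .
  qed
  have partial: "(\<Sum>j<J. (cmod (l j))\<^sup>2) \<le> B\<^sup>2" for J
  proof (rule LIMSEQ_le_const2)
    show "(\<lambda>m. \<Sum>j<J. (cmod (X (r m) j))\<^sup>2) \<longlonglongrightarrow> (\<Sum>j<J. (cmod (l j))\<^sup>2)"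
      by (intro tendsto_intros coord)
  qed (use energy_X in blast)
  have "summable (\<lambda>j. (cmod (l j))\<^sup>2)"
    by (rule summableI_nonneg_bounded[OF _ partial]) simp
  then have "l \<in> ell2" by (simp add: ell2_def)
  show ?thesis
    by (rule that[OF \<open>strict_mono r\<close> \<open>l \<in> ell2\<close> suminf_le_const[OF \<open>summable _\<close> partial] coord])
qed

lemma compact_op_rhaly_if_tail_decay:
  assumes "\<alpha> \<in> ell2"
    and decay: "(\<lambda>k. (real k + 1) * tail_sum (\<lambda>n. (cmod (\<alpha> n))\<^sup>2) k) \<longlonglongrightarrow> 0"
  shows "compact_op_ell2 (rhaly \<alpha>)"
  unfolding compact_op_ell2_def
proof (intro conjI ballI allI impI)
  obtain N where N: "\<And>k. k \<ge> N \<Longrightarrow> \<bar>(real k + 1) * tail_sum (\<lambda>n. (cmod (\<alpha> n))\<^sup>2) k\<bar> < 1"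
    using LIMSEQ_D[OF decay, of 1] by auto
  have "(real k + 1) * tail_sum (\<lambda>n. (cmod (\<alpha> n))\<^sup>2) k \<le> 1" if "k \<ge> N" for k
    using N[OF that] by (simp add: abs_less_iff)
  then show "rhaly \<alpha> x \<in> ell2" if "x \<in> ell2" for x
    by (rule rhaly_energy_le_head_tail(1)[OF assms(1) that])
  note rhaly_ell2 = this
  fix X :: "nat \<Rightarrow> nat \<Rightarrow> complex" and B :: real
  assume "\<forall>m. X m \<in> ell2 \<and> ell2_norm (X m) \<le> B"
  then have X: "\<And>m. X m \<in> ell2" "\<And>m. ell2_norm (X m) \<le> B" by auto
  obtain r l where r: "strict_mono r" and "l \<in> ell2" and l_energy: "(\<Sum>j. (cmod (l j))\<^sup>2) \<le> B\<^sup>2"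
    and coord: "\<And>j. (\<lambda>m. X (r m) j) \<longlonglongrightarrow> l j"
    using ell2_bounded_imp_coordinatewise_convergent_subseq[of X B, OF X] by blast
  define z where "z m = X (r m) - l" for m
  have z: "z m \<in> ell2" for m unfolding z_def by (rule ell2_diff(1)[OF X(1) \<open>l \<in> ell2\<close>])
  have X_energy: "(\<Sum>n. (cmod (X m n))\<^sup>2) \<le> B\<^sup>2" for m
    by (rule ell2_energy_le_if_norm_le[OF X(1,2)])
  have z_energy: "(\<Sum>n. (cmod (z m n))\<^sup>2) \<le> 4 * B\<^sup>2" for m
    using ell2_diff(2)[OF X(1) \<open>l \<in> ell2\<close>, of "r m"] l_energy X_energy[of "r m"]
    unfolding z_def by linarith
  have "(\<lambda>m. X (r m) j - l j) \<longlonglongrightarrow> l j - l j" for j by (intro tendsto_intros coord)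
  then have "(\<lambda>m. z m j) \<longlonglongrightarrow> 0" for j unfolding z_def by simp
  from rhaly_energy_tendsto_0[OF assms z z_energy this]
  have "(\<lambda>m. sqrt (\<Sum>k. (cmod (rhaly \<alpha> (z m) k))\<^sup>2)) \<longlonglongrightarrow> sqrt 0" by (intro tendsto_intros)
  moreover have "rhaly \<alpha> (X (r m)) - rhaly \<alpha> l = rhaly \<alpha> (z m)" for m
    unfolding rhaly_def z_def by (simp add: fun_eq_iff sum_subtractf right_diff_distrib)
  ultimately have "(\<lambda>m. ell2_norm (rhaly \<alpha> (X (r m)) - rhaly \<alpha> l)) \<longlonglongrightarrow> 0"
    by (simp add: ell2_norm_def)
  then show "\<exists>r y. strict_mono r \<and> y \<in> ell2 \<and> (\<lambda>m. ell2_norm (rhaly \<alpha> (X (r m)) - y)) \<longlonglongrightarrow> 0"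
    using r rhaly_ell2[OF \<open>l \<in> ell2\<close>] by blast
qed

lemma LIMSEQ_if_subseq_subseq:
  fixes u :: "nat \<Rightarrow> 'a::metric_space"
  assumes "\<And>s::nat \<Rightarrow> nat. strict_mono s \<Longrightarrow> \<exists>r::nat \<Rightarrow> nat. strict_mono r \<and> (\<lambda>m. u (s (r m))) \<longlonglongrightarrow> L"
  shows "u \<longlonglongrightarrow> L"
proof (rule ccontr)
  assume "\<not> u \<longlonglongrightarrow> L"
  then obtain e where "e > 0" and "\<not> (\<forall>\<^sub>F n in sequentially. dist (u n) L < e)"
    using tendstoI[of u L sequentially] by blast
  then have "infinite {n. \<not> dist (u n) L < e}"
    unfolding eventually_sequentially infinite_nat_iff_unbounded_le by auto
  then obtain s :: "nat \<Rightarrow> nat" where "strict_mono s" and far: "\<And>m. \<not> dist (u (s m)) L < e"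
    using infinite_enumerate by blast
  from assms[OF this(1)] obtain r where "(\<lambda>m. u (s (r m))) \<longlonglongrightarrow> L" by blast
  from tendstoD[OF this \<open>e > 0\<close>] obtain N where "dist (u (s (r N))) L < e"
    by (auto simp: eventually_sequentially)
  with far show False by blast
qed

lemma compact_op_ell2_norm_tendsto_0:
  fixes X :: "nat \<Rightarrow> nat \<Rightarrow> complex"
  assumes T: "compact_op_ell2 T"
    and X: "\<And>m. X m \<in> ell2" "\<And>m. ell2_norm (X m) \<le> B"
    and coord: "\<And>k. (\<lambda>m. T (X m) k) \<longlonglongrightarrow> 0"
  shows "(\<lambda>m. ell2_norm (T (X m))) \<longlonglongrightarrow> 0"
proof (rule LIMSEQ_if_subseq_subseq)
  fix s :: "nat \<Rightarrow> nat" assume "strict_mono s"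
  have T_ell2: "T x \<in> ell2" if "x \<in> ell2" for x
    by (rule T[unfolded compact_op_ell2_def, THEN conjunct1, rule_format, OF that])
  have Xs: "\<And>m. X (s m) \<in> ell2 \<and> ell2_norm (X (s m)) \<le> B" by (simp add: X)
  have "\<exists>r y. strict_mono r \<and> y \<in> ell2 \<and> (\<lambda>m. ell2_norm (T (X (s (r m))) - y)) \<longlonglongrightarrow> 0"
    by (rule T[unfolded compact_op_ell2_def, THEN conjunct2, rule_format, OF Xs])
  then obtain r :: "nat \<Rightarrow> nat" and y where "strict_mono r" "y \<in> ell2"
    and lim: "(\<lambda>m. ell2_norm (T (X (s (r m))) - y)) \<longlonglongrightarrow> 0"
    by blast
  have "y k = 0" for k
  proof -
    have "(\<lambda>m. T (X (s (r m))) k) \<longlonglongrightarrow> 0"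
      using LIMSEQ_subseq_LIMSEQ[OF coord strict_mono_o[OF \<open>strict_mono s\<close> \<open>strict_mono r\<close>]]
      by (simp add: o_def)
    moreover have "(\<lambda>m. T (X (s (r m))) k - y k) \<longlonglongrightarrow> 0"
    proof (rule Lim_null_comparison[OF always_eventually lim], rule allI)
      fix m
      show "norm (T (X (s (r m))) k - y k) \<le> ell2_norm (T (X (s (r m))) - y)"
        using norm_le_ell2_norm[OF ell2_diff(1)[OF T_ell2[OF X(1)] \<open>y \<in> ell2\<close>]] by simp
    qed
    ultimately have "(\<lambda>m. T (X (s (r m))) k - (T (X (s (r m))) k - y k)) \<longlonglongrightarrow> 0 - 0"
      by (intro tendsto_diff)
    then show "y k = 0" by (simp add: LIMSEQ_const_iff)
  qed
  then have "y = (\<lambda>_. 0)" by (simp add: fun_eq_iff)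
  then show "\<exists>r. strict_mono r \<and> (\<lambda>m. ell2_norm (T (X (s (r m))))) \<longlonglongrightarrow> 0"
    using lim \<open>strict_mono r\<close> by (intro exI[of _ r]) (simp add: fun_diff_def)
qed

definition dyadic_test_vector :: "nat \<Rightarrow> nat \<Rightarrow> complex" where
  "dyadic_test_vector n j = (if j \<in> {2^n..<2^(n+1)} then of_real (1 / sqrt (2^n)) else 0)"

lemma dyadic_test_vector_ell2:
  "dyadic_test_vector n \<in> ell2" "ell2_norm (dyadic_test_vector n) = 1"
proof -
  have fin: "finite {(2::nat)^n..<2^(n+1)}" by simp
  have zero: "(cmod (dyadic_test_vector n j))\<^sup>2 = 0" if "j \<notin> {2^n..<2^(n+1)}" for j
    using that unfolding dyadic_test_vector_def by simp
  show "dyadic_test_vector n \<in> ell2"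
    unfolding ell2_def using summable_finite[OF fin zero] by simp
  have "(\<Sum>j. (cmod (dyadic_test_vector n j))\<^sup>2) = (\<Sum>j\<in>{2^n..<2^(n+1)}. (cmod (dyadic_test_vector n j))\<^sup>2)"
    by (rule suminf_finite[OF fin zero])
  also have "\<dots> = (\<Sum>j\<in>{(2::nat)^n..<2^(n+1)}. 1 / 2^n)"
    by (rule sum.cong) (auto simp: dyadic_test_vector_def norm_divide power_divide)
  also have "\<dots> = 1" by simp
  finally show "ell2_norm (dyadic_test_vector n) = 1" unfolding ell2_norm_def by simp
qed

lemma rhaly_dyadic_test_vector_below:
  assumes "k < 2^n"
  shows "rhaly \<alpha> (dyadic_test_vector n) k = 0"
  using assms unfolding rhaly_def dyadic_test_vector_def by (simp add: sum.neutral)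

lemma rhaly_dyadic_test_vector_above:
  assumes "k \<ge> 2^(n+1)"
  shows "(cmod (rhaly \<alpha> (dyadic_test_vector n) k))\<^sup>2 = 2^n * (cmod (\<alpha> k))\<^sup>2"
proof -
  have "(\<Sum>j\<le>k. dyadic_test_vector n j)
      = (\<Sum>j\<in>{..k} \<inter> {(2::nat)^n..<2^(n+1)}. of_real (1 / sqrt (2^n)))"
    unfolding dyadic_test_vector_def by (simp only: sum.inter_restrict[OF finite_atMost])
  also have "{..k} \<inter> {(2::nat)^n..<2^(n+1)} = {2^n..<2^(n+1)}" using assms by auto
  also have "(\<Sum>j\<in>{(2::nat)^n..<2^(n+1)}. of_real (1 / sqrt (2^n))) = (of_real (2^n / sqrt (2^n)) :: complex)"
    by simp
  also have "2^n / sqrt (2^n) = sqrt (2^n :: real)" by (simp add: real_div_sqrt)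
  finally show ?thesis unfolding rhaly_def by (simp add: norm_mult power_mult_distrib)
qed

text \<open>Compactness forces \<open>rhaly \<alpha>\<close> to shrink the normalised indicators of the dyadic blocks,
  whose images carry the next dyadic block of \<open>\<alpha>\<close> with weight \<open>2^n\<close>.\<close>

lemma dyadic_decay_if_compact_op_rhaly:
  assumes "compact_op_ell2 (rhaly \<alpha>)"
  shows "(\<lambda>n. 2 ^ n * dyadic_block (\<lambda>j. (cmod (\<alpha> j))\<^sup>2) n) \<longlonglongrightarrow> 0"
proof -
  define u where "u n = ell2_norm (rhaly \<alpha> (dyadic_test_vector n))" for n
  have coord: "(\<lambda>n. rhaly \<alpha> (dyadic_test_vector n) k) \<longlonglongrightarrow> 0" for k
  proof (rule tendsto_eventually, rule eventually_sequentiallyI)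
    fix n assume "k \<le> n"
    then have "k < 2^n" using less_exp[of n] by linarith
    then show "rhaly \<alpha> (dyadic_test_vector n) k = 0" by (rule rhaly_dyadic_test_vector_below)
  qed
  have "u \<longlonglongrightarrow> 0"
    unfolding u_def
    by (rule compact_op_ell2_norm_tendsto_0[OF assms, where B=1]) (simp_all add: dyadic_test_vector_ell2 coord)
  then have "(\<lambda>n. (u n)\<^sup>2) \<longlonglongrightarrow> 0" using tendsto_power[of u 0 sequentially 2] by simp
  then have lim: "(\<lambda>n. 2 * (u n)\<^sup>2) \<longlonglongrightarrow> 0" by (rule tendsto_mult_right_zero)
  have bound: "2 ^ Suc n * dyadic_block (\<lambda>j. (cmod (\<alpha> j))\<^sup>2) (Suc n) \<le> 2 * (u n)\<^sup>2" for n
  proof -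
    have R: "rhaly \<alpha> (dyadic_test_vector n) \<in> ell2"
      by (rule assms[unfolded compact_op_ell2_def, THEN conjunct1, rule_format,
            OF dyadic_test_vector_ell2(1)])
    have "2 ^ n * dyadic_block (\<lambda>j. (cmod (\<alpha> j))\<^sup>2) (Suc n)
        = (\<Sum>k\<in>{2^Suc n..<2^(Suc n + 1)}. (cmod (rhaly \<alpha> (dyadic_test_vector n) k))\<^sup>2)"
      unfolding dyadic_block_def sum_distrib_left
      by (intro sum.cong) (simp_all add: rhaly_dyadic_test_vector_above)
    also have "\<dots> \<le> (u n)\<^sup>2"
      unfolding u_def ell2_norm_sq[OF R] using R unfolding ell2_def by (intro sum_le_suminf) auto
    finally show ?thesis by simp
  qed
  have "(\<lambda>n. 2 ^ Suc n * dyadic_block (\<lambda>j. (cmod (\<alpha> j))\<^sup>2) (Suc n)) \<longlonglongrightarrow> 0"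
  proof (rule tendsto_sandwich[where f="\<lambda>_. 0", OF _ _ tendsto_const lim])
    show "\<forall>\<^sub>F n in sequentially. 0 \<le> 2 ^ Suc n * dyadic_block (\<lambda>j. (cmod (\<alpha> j))\<^sup>2) (Suc n)"
      by (simp add: dyadic_block_def sum_nonneg)
    show "\<forall>\<^sub>F n in sequentially. 2 ^ Suc n * dyadic_block (\<lambda>j. (cmod (\<alpha> j))\<^sup>2) (Suc n) \<le> 2 * (u n)\<^sup>2"
      using bound by simp
  qed
  then show ?thesis by (rule LIMSEQ_imp_Suc)
qed

section \<open>Square integrable functions on the circle\<close>

definition L2T_energy :: "(real \<Rightarrow> complex) \<Rightarrow> real" where
  "L2T_energy h = integral {0..2*pi} (\<lambda>\<theta>. (cmod (h \<theta>))\<^sup>2)"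

lemma L2T_sq_integrable:
  assumes "h \<in> L2T"
  shows "(\<lambda>\<theta>. (cmod (h \<theta>))\<^sup>2) integrable_on {0..2*pi}"
  using assms set_borel_integral_eq_integral(1) unfolding L2T_def by blast

lemma L2T_energy_has_integral:
  assumes "h \<in> L2T"
  shows "((\<lambda>\<theta>. (cmod (h \<theta>))\<^sup>2) has_integral L2T_energy h) {0..2*pi}"
  unfolding L2T_energy_def using L2T_sq_integrable[OF assms] by (rule integrable_integral)

lemma L2T_energy_nonneg: "h \<in> L2T \<Longrightarrow> L2T_energy h \<ge> 0"
  unfolding L2T_energy_def by (rule integral_nonneg[OF L2T_sq_integrable]) auto

lemma L2T_norm_eq_energy:
  assumes "h \<in> L2T"
  shows "L2T_norm h = sqrt (L2T_energy h / (2*pi))"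
  using assms set_borel_integral_eq_integral(2)[of "{0..2*pi}" "\<lambda>\<theta>. (cmod (h \<theta>))\<^sup>2"]
  unfolding L2T_def L2T_norm_def L2T_energy_def by simp

lemma L2T_energy_eq_norm_sq:
  assumes "h \<in> L2T"
  shows "L2T_energy h = 2*pi * (L2T_norm h)\<^sup>2"
  using L2T_energy_nonneg[OF assms] by (simp add: L2T_norm_eq_energy[OF assms])

lemma L2TI:
  assumes meas: "h \<in> borel_measurable lborel" and per: "\<And>\<theta>. h (\<theta> + 2*pi) = h \<theta>"
    and int: "(\<lambda>\<theta>. (cmod (h \<theta>))\<^sup>2) integrable_on {0..2*pi}"
  shows "h \<in> L2T"
proof -
  note meas[measurable]
  have "(\<lambda>\<theta>. (cmod (h \<theta>))\<^sup>2) absolutely_integrable_on {0..2*pi}"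
    by (rule nonnegative_absolutely_integrable_1[OF int]) simp
  then have "integrable lebesgue (\<lambda>x. indicator {0..2*pi} x *\<^sub>R (cmod (h x))\<^sup>2)"
    unfolding set_integrable_def .
  moreover have m: "(\<lambda>x. indicator {0..2*pi} x *\<^sub>R (cmod (h x))\<^sup>2) \<in> borel_measurable lborel"
    by measurable
  ultimately have "set_integrable lborel {0..2*pi} (\<lambda>\<theta>. (cmod (h \<theta>))\<^sup>2)"
    unfolding set_integrable_def using integrable_completion[OF m] by simp
  then show ?thesis unfolding L2T_def using meas per by simp
qed

lemma L2T_diff:
  assumes "u \<in> L2T" "v \<in> L2T"
  shows "(\<lambda>\<theta>. u \<theta> - v \<theta>) \<in> L2T"
proof -
  have [measurable]: "u \<in> borel_measurable lborel" "v \<in> borel_measurable lborel"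
    using assms unfolding L2T_def by auto
  have "set_integrable lborel {0..2*pi} (\<lambda>\<theta>. 2 * (cmod (u \<theta>))\<^sup>2 + 2 * (cmod (v \<theta>))\<^sup>2)"
    using assms unfolding L2T_def by (intro set_integral_add(1) set_integrable_mult_right) auto
  then have "set_integrable lborel {0..2*pi} (\<lambda>\<theta>. (cmod (u \<theta> - v \<theta>))\<^sup>2)"
  proof (rule set_integrable_bound)
    show "set_borel_measurable lborel {0..2*pi} (\<lambda>\<theta>. (cmod (u \<theta> - v \<theta>))\<^sup>2)"
      unfolding set_borel_measurable_def by measurable
    show "AE \<theta> in lborel. \<theta> \<in> {0..2*pi} \<longrightarrow>
        norm ((cmod (u \<theta> - v \<theta>))\<^sup>2) \<le> norm (2 * (cmod (u \<theta>))\<^sup>2 + 2 * (cmod (v \<theta>))\<^sup>2)"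
    proof (intro AE_I2 impI)
      fix \<theta>
      show "norm ((cmod (u \<theta> - v \<theta>))\<^sup>2) \<le> norm (2 * (cmod (u \<theta>))\<^sup>2 + 2 * (cmod (v \<theta>))\<^sup>2)"
        using norm_diff_sq_le[of "u \<theta>" "v \<theta>"] by simp
    qed
  qed
  moreover have "(\<lambda>\<theta>. u \<theta> - v \<theta>) \<in> borel_measurable lborel" by measurable
  ultimately show ?thesis using assms unfolding L2T_def by auto
qed

lemma periodic_plus_of_int_mult:
  assumes per: "\<And>x. q (x + p) = q x"
  shows "q (x + of_int k * p) = q x"
proof -
  have nat: "q (y + of_nat n * p) = q y" for y n
  proof (induction n)
    case (Suc n)
    have "q (y + of_nat (Suc n) * p) = q ((y + of_nat n * p) + p)" by (simp add: algebra_simps)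
    with Suc show ?case by (simp only: per)
  qed simp
  show ?thesis
  proof (cases "k \<ge> 0")
    case True
    then obtain n where "k = int n" by (rule nonneg_int_cases)
    then show ?thesis using nat[of x n] by simp
  next
    case False
    then have "0 \<le> - k" by simp
    then obtain n where "- k = int n" by (rule nonneg_int_cases)
    then have "k = - int n" by simp
    then show ?thesis using nat[of "x + of_int k * p" n] by simp
  qed
qed

lemma has_integral_translate_real:
  fixes f :: "real \<Rightarrow> 'a::euclidean_space"
  assumes "(f has_integral i) {a..b}"
  shows "((\<lambda>x. f (x + c)) has_integral i) {a - c..b - c}"
  using has_integral_affinity'[of f i a b 1 c] assms by (simp add: cbox_interval)

text \<open>A period interval starting at \<open>a\<close> is cut at the multiple \<open>(k + 1) * p\<close> of the period
  inside it, and each piece is translated back into \<open>{0..p}\<close>.\<close>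

lemma has_integral_periodic_translate:
  fixes q :: "real \<Rightarrow> 'a::euclidean_space"
  assumes "p > 0" and per: "\<And>x. q (x + p) = q x" and int: "q integrable_on {0..p}"
  shows "(q has_integral integral {0..p} q) {a..a + p}"
proof -
  define k where "k = \<lfloor>a / p\<rfloor>"
  define b where "b = a - of_int k * p"
  have k1: "of_int k * p \<le> a" and k2: "a < (of_int k + 1) * p"
    using floor_divide_lower[OF \<open>p > 0\<close>, of a] floor_divide_upper[OF \<open>p > 0\<close>, of a]
    unfolding k_def by simp_all
  have "0 \<le> b" "b \<le> p" unfolding b_def using k1 k2 by (simp_all add: algebra_simps)
  have shift: "q (x + - (of_int j * p)) = q x" for x j
    using periodic_plus_of_int_mult[of q p x "- j"] per by simp
  have "((\<lambda>x. q (x + - (of_int k * p))) has_integral integral {b..p} q) {b - - (of_int k * p)..p - - (of_int k * p)}"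
    by (rule has_integral_translate_real)
      (use integrable_subinterval_real[OF int, of b p] \<open>0 \<le> b\<close> in auto)
  then have right: "(q has_integral integral {b..p} q) {a..(of_int k + 1) * p}"
    unfolding shift b_def by (simp add: algebra_simps)
  have "((\<lambda>x. q (x + - (of_int (k + 1) * p))) has_integral integral {0..b} q)
      {0 - - (of_int (k + 1) * p)..b - - (of_int (k + 1) * p)}"
    by (rule has_integral_translate_real)
      (use integrable_subinterval_real[OF int, of 0 b] \<open>b \<le> p\<close> in auto)
  then have left: "(q has_integral integral {0..b} q) {(of_int k + 1) * p..a + p}"
    unfolding shift b_def by (simp add: algebra_simps)
  have "(q has_integral integral {b..p} q + integral {0..b} q) {a..a + p}"
    by (rule has_integral_combine[OF _ _ right left]) (use k1 k2 in \<open>simp_all add: algebra_simps\<close>)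
  moreover have "integral {0..b} q + integral {b..p} q = integral {0..p} q"
    by (rule Henstock_Kurzweil_Integration.integral_combine[OF \<open>0 \<le> b\<close> \<open>b \<le> p\<close> int])
  ultimately show ?thesis by (simp add: add.commute)
qed

lemma L2T_translate:
  assumes "h \<in> L2T"
  shows "(\<lambda>\<theta>. h (\<theta> - t)) \<in> L2T" and "L2T_energy (\<lambda>\<theta>. h (\<theta> - t)) = L2T_energy h"
proof -
  have [measurable]: "h \<in> borel_measurable lborel" and per: "\<And>\<theta>. h (\<theta> + 2*pi) = h \<theta>"
    using assms unfolding L2T_def by auto
  have "((\<lambda>\<theta>. (cmod (h \<theta>))\<^sup>2) has_integral L2T_energy h) {-t..-t + 2*pi}"
    unfolding L2T_energy_def
    by (rule has_integral_periodic_translate) (simp_all add: per L2T_sq_integrable[OF assms])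
  from has_integral_translate_real[OF this, of "-t"]
  have shifted: "((\<lambda>\<theta>. (cmod (h (\<theta> - t)))\<^sup>2) has_integral L2T_energy h) {0..2*pi}" by simp
  have "h ((\<theta> + 2*pi) - t) = h (\<theta> - t)" for \<theta> using per[of "\<theta> - t"] by (simp add: algebra_simps)
  then show "(\<lambda>\<theta>. h (\<theta> - t)) \<in> L2T"
    using shifted by (intro L2TI) auto
  then show "L2T_energy (\<lambda>\<theta>. h (\<theta> - t)) = L2T_energy h"
    using has_integral_unique[OF L2T_energy_has_integral shifted] by simp
qed

lemma abs_norm_sq_diff_le:
  fixes a b :: "'a::real_normed_vector"
  assumes "\<epsilon> > 0"
  shows "\<bar>(norm a)\<^sup>2 - (norm b)\<^sup>2\<bar> \<le> \<epsilon> * (norm b)\<^sup>2 + (1 + 1/\<epsilon>) * (norm (a - b))\<^sup>2"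
proof -
  define x y where "x = norm (a - b)" and "y = norm b"
  have "\<bar>norm a - y\<bar> \<le> x" "0 \<le> x" "0 \<le> y" unfolding x_def y_def by (simp_all add: norm_triangle_ineq3)
  have "\<bar>(norm a)\<^sup>2 - y\<^sup>2\<bar> = \<bar>norm a - y\<bar> * (norm a + y)"
    using \<open>0 \<le> y\<close> by (simp add: power2_eq_square square_diff_square_factored abs_mult)
  also have "\<dots> \<le> x * (x + 2 * y)"
    using \<open>\<bar>norm a - y\<bar> \<le> x\<close> \<open>0 \<le> x\<close> \<open>0 \<le> y\<close> by (intro mult_mono) auto
  finally have "\<bar>(norm a)\<^sup>2 - y\<^sup>2\<bar> \<le> x * (x + 2 * y)" .
  moreover have "2 * x * y \<le> \<epsilon> * y\<^sup>2 + x\<^sup>2 / \<epsilon>"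
  proof -
    have "0 \<le> (\<epsilon> * y - x)\<^sup>2 / \<epsilon>" using assms by simp
    then show ?thesis using assms by (simp add: power2_eq_square field_simps)
  qed
  ultimately show ?thesis unfolding x_def y_def by (simp add: algebra_simps power2_eq_square)
qed

lemma abs_L2T_energy_diff_le:
  assumes u: "u \<in> L2T" and v: "v \<in> L2T" and "\<epsilon> > 0"
  shows "\<bar>L2T_energy u - L2T_energy v\<bar>
    \<le> \<epsilon> * L2T_energy v + (1 + 1/\<epsilon>) * L2T_energy (\<lambda>\<theta>. u \<theta> - v \<theta>)"
proof -
  have i1: "((\<lambda>\<theta>. (cmod (u \<theta>))\<^sup>2 - (cmod (v \<theta>))\<^sup>2) has_integral (L2T_energy u - L2T_energy v)) {0..2*pi}"
    by (intro has_integral_diff L2T_energy_has_integral u v)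
  have i2: "((\<lambda>\<theta>. \<epsilon> * (cmod (v \<theta>))\<^sup>2 + (1 + 1/\<epsilon>) * (cmod (u \<theta> - v \<theta>))\<^sup>2) has_integral
      (\<epsilon> * L2T_energy v + (1 + 1/\<epsilon>) * L2T_energy (\<lambda>\<theta>. u \<theta> - v \<theta>))) {0..2*pi}"
    by (intro has_integral_add has_integral_mult_right L2T_energy_has_integral v L2T_diff[OF u v])
  have "norm (L2T_energy u - L2T_energy v)
      \<le> (\<epsilon> * L2T_energy v + (1 + 1/\<epsilon>) * L2T_energy (\<lambda>\<theta>. u \<theta> - v \<theta>)) \<bullet> 1"
    by (rule has_integral_norm_bound_integral_component[OF i1 i2])
      (use abs_norm_sq_diff_le[OF \<open>\<epsilon> > 0\<close>] in simp)
  then show ?thesis by simp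
qed

lemma L2T_energy_diff_le:
  assumes u: "u \<in> L2T" and v: "v \<in> L2T"
  shows "L2T_energy (\<lambda>\<theta>. u \<theta> - v \<theta>) \<le> 2 * L2T_energy u + 2 * L2T_energy v"
proof -
  have "((\<lambda>\<theta>. 2 * (cmod (u \<theta>))\<^sup>2 + 2 * (cmod (v \<theta>))\<^sup>2) has_integral (2 * L2T_energy u + 2 * L2T_energy v)) {0..2*pi}"
    by (intro has_integral_add has_integral_mult_right L2T_energy_has_integral u v)
  with L2T_energy_has_integral[OF L2T_diff[OF u v]] show ?thesis
    by (rule has_integral_le) (simp add: norm_diff_sq_le)
qed

lemma L2T_energy_tendsto:
  assumes u: "\<And>N. u N \<in> L2T" and v: "v \<in> L2T"
    and lim: "(\<lambda>N. L2T_energy (\<lambda>\<theta>. u N \<theta> - v \<theta>)) \<longlonglongrightarrow> 0"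
  shows "(\<lambda>N. L2T_energy (u N)) \<longlonglongrightarrow> L2T_energy v"
proof (rule LIMSEQ_I)
  fix e :: real assume "e > 0"
  define \<epsilon> where "\<epsilon> = e / (2 * (L2T_energy v + 1))"
  have "L2T_energy v \<ge> 0" by (rule L2T_energy_nonneg[OF v])
  then have "\<epsilon> > 0" and "\<epsilon> * L2T_energy v < e / 2"
    unfolding \<epsilon>_def using \<open>e > 0\<close> by (simp_all add: field_simps)
  define K where "K = 1 + 1 / \<epsilon>"
  have "K > 0" unfolding K_def using \<open>\<epsilon> > 0\<close> by (simp add: add_pos_pos)
  then obtain N0 where N0: "\<And>N. N \<ge> N0 \<Longrightarrow> \<bar>L2T_energy (\<lambda>\<theta>. u N \<theta> - v \<theta>)\<bar> < e / (2 * K)"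
    using LIMSEQ_D[OF lim, of "e / (2 * K)"] \<open>e > 0\<close> by auto
  have "norm (L2T_energy (u N) - L2T_energy v) < e" if "N \<ge> N0" for N
  proof -
    have "L2T_energy (\<lambda>\<theta>. u N \<theta> - v \<theta>) < e / (2 * K)"
      using N0[OF that] by (simp add: abs_less_iff)
    then have "K * L2T_energy (\<lambda>\<theta>. u N \<theta> - v \<theta>) < e / 2"
      using \<open>K > 0\<close> by (simp add: field_simps)
    then show ?thesis
      using abs_L2T_energy_diff_le[OF u v \<open>\<epsilon> > 0\<close>, of N] \<open>\<epsilon> * L2T_energy v < e / 2\<close>
      unfolding K_def real_norm_def by linarith
  qed
  then show "\<exists>N0. \<forall>N\<ge>N0. norm (L2T_energy (u N) - L2T_energy v) < e" by blast
qed

section \<open>Trigonometric polynomials and Parseval's identity\<close>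

definition trig_poly :: "(nat \<Rightarrow> complex) \<Rightarrow> nat \<Rightarrow> real \<Rightarrow> complex" where
  "trig_poly c N \<theta> = (\<Sum>n<N. c n * exp (\<i> * of_nat n * of_real \<theta>))"

lemma boundary_fun_iff:
  "boundary_fun \<alpha> g \<longleftrightarrow> g \<in> L2T \<and> (\<lambda>N. L2T_norm (\<lambda>\<theta>. g \<theta> - trig_poly \<alpha> N \<theta>)) \<longlonglongrightarrow> 0"
  unfolding boundary_fun_def trig_poly_def ..

lemma exp_ii_nat_periodic:
  "exp (\<i> * of_nat n * of_real (\<theta> + 2*pi)) = exp (\<i> * of_nat n * of_real \<theta>)"
proof -
  have "\<i> * of_nat n * of_real (\<theta> + 2*pi) = \<i> * of_nat n * of_real \<theta> + \<i> * (of_nat n * (of_real pi * 2))"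
    by (simp add: algebra_simps)
  then show ?thesis by (simp only: exp_add exp_2pi_1_nat mult_1_right)
qed

lemma trig_poly_periodic: "trig_poly c N (\<theta> + 2*pi) = trig_poly c N \<theta>"
  unfolding trig_poly_def by (simp only: exp_ii_nat_periodic)

lemma trig_poly_L2T: "trig_poly c N \<in> L2T"
proof (rule L2TI)
  have "continuous_on UNIV (trig_poly c N)"
    unfolding trig_poly_def[abs_def] by (intro continuous_intros)
  then show "trig_poly c N \<in> borel_measurable lborel"
    using borel_measurable_continuous_onI by simp
  show "(\<lambda>\<theta>. (cmod (trig_poly c N \<theta>))\<^sup>2) integrable_on {0..2 * pi}"
    unfolding trig_poly_def by (intro integrable_continuous_interval continuous_intros)
qed (rule trig_poly_periodic)

lemma integral_exp_ii_orthogonal: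
  "integral {0..2*pi} (\<lambda>\<theta>. exp (\<i> * (of_nat n - of_nat m) * complex_of_real \<theta>))
    = (if n = m then 2*pi else 0)"
proof (cases "n = m")
  case False
  then have "\<i> * (of_nat n - of_nat m) \<noteq> (0::complex)" by simp
  then have "integral {0..2*pi} (\<lambda>\<theta>. exp (\<i> * (of_nat n - of_nat m) * complex_of_real \<theta>))
      = (exp (\<i> * (of_nat n - of_nat m) * of_real (2*pi)) - 1) / (\<i> * (of_nat n - of_nat m))"
    by (intro integral_exp) auto
  also have "exp (\<i> * (of_nat n - of_nat m) * of_real (2*pi)) = exp (\<i> * (of_int (int n - int m) * (of_real pi * 2)))"
    by (simp add: algebra_simps)
  also have "\<dots> = 1" by (rule exp_2pi_1_int)
  finally show ?thesis using False by simp
qed (simp add: scaleR_conv_of_real)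

lemma L2T_energy_trig_poly: "L2T_energy (trig_poly c N) = 2*pi * (\<Sum>n<N. (cmod (c n))\<^sup>2)"
proof -
  define E where "E n m \<theta> = exp (\<i> * (of_nat n - of_nat m) * complex_of_real \<theta>)" for n m :: nat and \<theta> :: real
  have expand: "complex_of_real ((cmod (trig_poly c N \<theta>))\<^sup>2) = (\<Sum>n<N. \<Sum>m<N. (c n * cnj (c m)) * E n m \<theta>)" for \<theta>
  proof -
    have "exp (\<i> * of_nat n * of_real \<theta>) * cnj (exp (\<i> * of_nat m * of_real \<theta>)) = E n m \<theta>" for n m
      unfolding E_def by (simp add: exp_cnj exp_add[symmetric] algebra_simps)
    then show ?thesis
      unfolding complex_norm_square trig_poly_def by (simp add: sum_product algebra_simps)
  qed
  have "integral {0..2*pi} (\<lambda>\<theta>. \<Sum>n<N. \<Sum>m<N. (c n * cnj (c m)) * E n m \<theta>)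
      = (\<Sum>n<N. \<Sum>m<N. (c n * cnj (c m)) * integral {0..2*pi} (E n m))"
    unfolding E_def by (simp add: integral_sum integrable_continuous_interval continuous_intros)
  also have "\<dots> = (\<Sum>n<N. complex_of_real (2*pi * (cmod (c n))\<^sup>2))"
    unfolding E_def integral_exp_ii_orthogonal
    by (simp add: if_distrib sum.delta complex_norm_square[symmetric] mult.commute cong: if_cong)
  finally have A: "integral {0..2*pi} (\<lambda>\<theta>. complex_of_real ((cmod (trig_poly c N \<theta>))\<^sup>2))
      = complex_of_real (2*pi * (\<Sum>n<N. (cmod (c n))\<^sup>2))"
    unfolding expand by (simp add: sum_distrib_left)
  have B: "integral {0..2*pi} (\<lambda>\<theta>. complex_of_real ((cmod (trig_poly c N \<theta>))\<^sup>2))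
      = complex_of_real (L2T_energy (trig_poly c N))"
    unfolding L2T_energy_def
    by (rule integral_unique[OF has_integral_of_real[OF integrable_integral]])
      (rule L2T_sq_integrable[OF trig_poly_L2T])
  show ?thesis using trans[OF B[symmetric] A] by (simp only: of_real_eq_iff)
qed

lemma trig_poly_translate_diff:
  "trig_poly c N (\<theta> - t) - trig_poly c N \<theta>
    = trig_poly (\<lambda>n. c n * (exp (- (\<i> * of_nat n * of_real t)) - 1)) N \<theta>"
proof -
  have "exp (\<i> * of_nat n * of_real (\<theta> - t)) = exp (\<i> * of_nat n * of_real \<theta>) * exp (- (\<i> * of_nat n * of_real t))"
    for n by (simp add: exp_add[symmetric] algebra_simps)
  then show ?thesis unfolding trig_poly_def sum_subtractf[symmetric] by (simp add: algebra_simps)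
qed

lemma trig_poly_diff:
  assumes "N \<le> M"
  shows "trig_poly c M \<theta> - trig_poly c N \<theta> = trig_poly (\<lambda>n. if N \<le> n then c n else 0) M \<theta>"
proof -
  have "trig_poly c M \<theta> = trig_poly c N \<theta> + (\<Sum>n\<in>{N..<M}. c n * exp (\<i> * of_nat n * of_real \<theta>))"
    unfolding trig_poly_def atLeast0LessThan[symmetric]
    using sum.atLeastLessThan_concat[of 0 N M "\<lambda>n. c n * exp (\<i> * of_nat n * of_real \<theta>)"] assms
    by simp
  moreover have "trig_poly (\<lambda>n. if N \<le> n then c n else 0) M \<theta> = (\<Sum>n\<in>{N..<M}. c n * exp (\<i> * of_nat n * of_real \<theta>))"
    unfolding trig_poly_def by (rule sum.mono_neutral_cong_right) auto
  ultimately show ?thesis by simp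
qed

lemma L2T_energy_trig_poly_diff:
  assumes "N \<le> M"
  shows "L2T_energy (\<lambda>\<theta>. trig_poly c M \<theta> - trig_poly c N \<theta>) = 2*pi * (\<Sum>n\<in>{N..<M}. (cmod (c n))\<^sup>2)"
proof -
  have "(\<Sum>n<M. (cmod (if N \<le> n then c n else 0))\<^sup>2) = (\<Sum>n\<in>{N..<M}. (cmod (c n))\<^sup>2)"
    by (rule sum.mono_neutral_cong_right) auto
  then show ?thesis
    unfolding trig_poly_diff[OF assms] using L2T_energy_trig_poly[of "\<lambda>n. if N \<le> n then c n else 0" M]
    by (simp add: fun_eq_iff[symmetric])
qed

definition translation_weight :: "real \<Rightarrow> nat \<Rightarrow> real" where
  "translation_weight t n = 2 - 2 * cos (real n * t)"

lemma cmod_exp_ii_minus_one_sq: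
  "(cmod (exp (- (\<i> * of_nat n * of_real t)) - 1))\<^sup>2 = translation_weight t n"
proof -
  define z where "z = exp (- (\<i> * of_nat n * of_real t)) - 1"
  have "Re z = cos (real n * t) - 1" "Im z = - sin (real n * t)"
    unfolding z_def by (simp_all add: Re_exp Im_exp)
  then have "(cmod z)\<^sup>2 = (cos (real n * t) - 1)\<^sup>2 + (sin (real n * t))\<^sup>2"
    by (simp add: cmod_power2)
  also have "\<dots> = translation_weight t n"
    unfolding translation_weight_def using sin_cos_squared_add[of "real n * t"]
    by (simp add: power2_eq_square algebra_simps)
  finally show ?thesis unfolding z_def .
qed

lemma L2T_energy_trig_poly_translate_diff:
  "L2T_energy (\<lambda>\<theta>. trig_poly c N (\<theta> - t) - trig_poly c N \<theta>)
    = 2*pi * (\<Sum>n<N. (cmod (c n))\<^sup>2 * translation_weight t n)"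
  unfolding trig_poly_translate_diff L2T_energy_trig_poly[unfolded fun_eq_iff[symmetric]]
  by (simp add: norm_mult power_mult_distrib cmod_exp_ii_minus_one_sq)

lemma translation_parseval:
  assumes "boundary_fun \<alpha> g"
  shows "(\<lambda>n. (cmod (\<alpha> n))\<^sup>2 * translation_weight t n) sums (L2T_energy (\<lambda>\<theta>. g (\<theta> - t) - g \<theta>) / (2*pi))"
proof -
  have g: "g \<in> L2T" and lim: "(\<lambda>N. L2T_norm (\<lambda>\<theta>. g \<theta> - trig_poly \<alpha> N \<theta>)) \<longlonglongrightarrow> 0"
    using assms unfolding boundary_fun_iff by auto
  define h where "h N \<theta> = g \<theta> - trig_poly \<alpha> N \<theta>" for N \<theta>
  have h: "h N \<in> L2T" for N unfolding h_def by (rule L2T_diff[OF g trig_poly_L2T])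
  have "(\<lambda>N. 2*pi * (L2T_norm (h N))\<^sup>2) \<longlonglongrightarrow> 2*pi * 0\<^sup>2"
    using lim unfolding h_def by (intro tendsto_intros)
  then have energy_h: "(\<lambda>N. L2T_energy (h N)) \<longlonglongrightarrow> 0"
    by (simp add: L2T_energy_eq_norm_sq[OF h])
  define v where "v \<theta> = g (\<theta> - t) - g \<theta>" for \<theta>
  have v: "v \<in> L2T" unfolding v_def by (rule L2T_diff[OF L2T_translate(1)[OF g] g])
  define u where "u N \<theta> = trig_poly \<alpha> N (\<theta> - t) - trig_poly \<alpha> N \<theta>" for N \<theta>
  have u: "u N \<in> L2T" for N unfolding u_def by (rule L2T_diff[OF L2T_translate(1)[OF trig_poly_L2T] trig_poly_L2T])
  have bound: "L2T_energy (\<lambda>\<theta>. u N \<theta> - v \<theta>) \<le> 4 * L2T_energy (h N)" for N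
  proof -
    have "(\<lambda>\<theta>. u N \<theta> - v \<theta>) = (\<lambda>\<theta>. h N \<theta> - h N (\<theta> - t))"
      unfolding u_def v_def h_def by (simp add: fun_eq_iff algebra_simps)
    then show ?thesis
      using L2T_energy_diff_le[OF h[of N] L2T_translate(1)[OF h[of N], of t]]
        L2T_translate(2)[OF h[of N], of t] by simp
  qed
  have "(\<lambda>N. L2T_energy (\<lambda>\<theta>. u N \<theta> - v \<theta>)) \<longlonglongrightarrow> 0"
  proof (rule tendsto_sandwich[where f="\<lambda>_. 0", OF _ _ tendsto_const])
    show "\<forall>\<^sub>F N in sequentially. 0 \<le> L2T_energy (\<lambda>\<theta>. u N \<theta> - v \<theta>)"
      using L2T_energy_nonneg[OF L2T_diff[OF u v]] by simp
    show "\<forall>\<^sub>F N in sequentially. L2T_energy (\<lambda>\<theta>. u N \<theta> - v \<theta>) \<le> 4 * L2T_energy (h N)"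
      using bound by simp
    show "(\<lambda>N. 4 * L2T_energy (h N)) \<longlonglongrightarrow> 0" by (rule tendsto_mult_right_zero[OF energy_h])
  qed
  then have "(\<lambda>N. L2T_energy (u N)) \<longlonglongrightarrow> L2T_energy v" by (rule L2T_energy_tendsto[OF u v])
  then have "(\<lambda>N. L2T_energy (u N) / (2*pi)) \<longlonglongrightarrow> L2T_energy v / (2*pi)"
    using tendsto_divide[OF _ tendsto_const, of _ _ _ "2*pi"] by simp
  moreover have "L2T_energy (u N) / (2*pi) = (\<Sum>n<N. (cmod (\<alpha> n))\<^sup>2 * translation_weight t n)" for N
    unfolding u_def L2T_energy_trig_poly_translate_diff by simp
  ultimately show ?thesis unfolding sums_def v_def by simp
qed

lemma L2T_norm_translate_diff:
  assumes "boundary_fun \<alpha> g"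
  shows "L2T_norm (\<lambda>\<theta>. g (\<theta> - t) - g \<theta>) = sqrt (\<Sum>n. (cmod (\<alpha> n))\<^sup>2 * translation_weight t n)"
proof -
  have "g \<in> L2T" using assms unfolding boundary_fun_def by blast
  then have "(\<lambda>\<theta>. g (\<theta> - t) - g \<theta>) \<in> L2T" by (intro L2T_diff L2T_translate(1))
  then show ?thesis
    using sums_unique[OF translation_parseval[OF assms, of t]] by (simp add: L2T_norm_eq_energy)
qed

section \<open>Existence of the boundary function\<close>

lemma LIMSEQ_0_imp_subseq_le:
  fixes u :: "nat \<Rightarrow> real"
  assumes "u \<longlonglongrightarrow> 0" and "\<And>k. e k > 0"
  obtains N :: "nat \<Rightarrow> nat" where "strict_mono N" "\<And>k. u (N k) \<le> e k"
proof -
  have "\<exists>n. \<forall>m\<ge>n. u m \<le> e k" for k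
    using LIMSEQ_D[OF assms(1) assms(2)[of k]] by (force simp: abs_less_iff)
  then obtain n where n: "\<And>k m. m \<ge> n k \<Longrightarrow> u m \<le> e k" by metis
  define N where "N k = (\<Sum>i\<le>k. n i) + k" for k
  have "strict_mono N" unfolding strict_mono_Suc_iff N_def by simp
  moreover have "n k \<le> N k" for k
    unfolding N_def using member_le_sum[of k "{..k}" n] by simp
  ultimately show ?thesis using that n by blast
qed

lemma summable_if_summable_pow2_norm_sq:
  fixes h :: "nat \<Rightarrow> 'a::banach"
  assumes "summable (\<lambda>k. 2^k * (norm (h k))\<^sup>2)"
  shows "summable h"
proof -
  define R where "R = (\<Sum>k. 2^k * (norm (h k))\<^sup>2)"
  have R: "2^k * (norm (h k))\<^sup>2 \<le> R" for k
    unfolding R_def using sum_le_suminf[OF assms, of "{k}"] by simp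
  have "norm (h k) \<le> sqrt R * sqrt (1/2) ^ k" for k
  proof -
    have "(norm (h k))\<^sup>2 \<le> R * (1/2)^k" using R[of k] by (simp add: field_simps)
    then have "sqrt ((norm (h k))\<^sup>2) \<le> sqrt (R * (1/2)^k)" by (rule real_sqrt_le_mono)
    then show ?thesis by (simp add: real_sqrt_mult real_sqrt_power)
  qed
  moreover have "summable (\<lambda>k. sqrt R * sqrt (1/2) ^ k)"
    by (intro summable_mult summable_geometric) (simp add: real_sqrt_less_iff)
  ultimately show ?thesis using summable_comparison_test' by blast
qed

lemma nn_integral_sq_eq_L2T_energy:
  assumes "u \<in> L2T"
  shows "(\<integral>\<^sup>+\<theta>. ennreal ((cmod (u \<theta>))\<^sup>2) * indicator {0..2*pi} \<theta> \<partial>lborel) = ennreal (L2T_energy u)"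
  by (rule nn_integral_has_integral_lebesgue'[OF _ L2T_energy_has_integral[OF assms]]) simp

lemma sq_integrable_if_nn_integral_le:
  assumes [measurable]: "v \<in> borel_measurable lborel" and "B \<ge> 0"
    and le: "(\<integral>\<^sup>+\<theta>. ennreal ((cmod (v \<theta>))\<^sup>2) * indicator {0..2*pi} \<theta> \<partial>lborel) \<le> ennreal B"
  shows "(\<lambda>\<theta>. (cmod (v \<theta>))\<^sup>2) integrable_on {0..2*pi}"
    and "integral {0..2*pi} (\<lambda>\<theta>. (cmod (v \<theta>))\<^sup>2) \<le> B"
proof -
  define q where "q \<theta> = indicator {0..2*pi} \<theta> * (cmod (v \<theta>))\<^sup>2" for \<theta> :: real
  have "ennreal (q \<theta>) = ennreal ((cmod (v \<theta>))\<^sup>2) * indicator {0..2*pi} \<theta>" for \<theta>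
    unfolding q_def by (simp add: ennreal_mult' ennreal_indicator mult.commute)
  then have I: "(\<integral>\<^sup>+\<theta>. ennreal (q \<theta>) \<partial>lborel) \<le> ennreal B" using le by simp
  define r where "r = enn2real (\<integral>\<^sup>+\<theta>. ennreal (q \<theta>) \<partial>lborel)"
  have r: "(\<integral>\<^sup>+\<theta>. ennreal (q \<theta>) \<partial>lborel) = ennreal r" "r \<ge> 0"
    unfolding r_def using I by (auto simp: le_less_trans)
  have "q \<in> borel_measurable borel" unfolding q_def by measurable
  then have "(q has_integral r) UNIV"
    by (rule nn_integral_has_integral[OF _ _ r]) (simp add: q_def)
  moreover have "q = (\<lambda>\<theta>. if \<theta> \<in> {0..2*pi} then (cmod (v \<theta>))\<^sup>2 else 0)"
    unfolding q_def by (auto simp: fun_eq_iff indicator_def)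
  ultimately have "((\<lambda>\<theta>. (cmod (v \<theta>))\<^sup>2) has_integral r) {0..2*pi}"
    by (metis has_integral_restrict_UNIV)
  moreover have "r \<le> B" using I r \<open>B \<ge> 0\<close> by simp
  ultimately show "(\<lambda>\<theta>. (cmod (v \<theta>))\<^sup>2) integrable_on {0..2*pi}"
    and "integral {0..2*pi} (\<lambda>\<theta>. (cmod (v \<theta>))\<^sup>2) \<le> B"
    by (auto simp: integral_unique)
qed

lemma L2T_energy_le_if_ae_tendsto:
  assumes F: "\<And>k. F k \<in> L2T" and [measurable]: "g \<in> borel_measurable lborel"
    and lim: "AE \<theta> in lborel. \<theta> \<in> {0..2*pi} \<longrightarrow> (\<lambda>k. F k \<theta>) \<longlonglongrightarrow> g \<theta>"
    and bound: "\<And>k. k \<ge> K \<Longrightarrow> L2T_energy (F k) \<le> B"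
  shows "(\<lambda>\<theta>. (cmod (g \<theta>))\<^sup>2) integrable_on {0..2*pi}"
    and "integral {0..2*pi} (\<lambda>\<theta>. (cmod (g \<theta>))\<^sup>2) \<le> B"
proof -
  have [measurable]: "F k \<in> borel_measurable lborel" for k using F unfolding L2T_def by blast
  define u where "u k \<theta> = ennreal ((cmod (F k \<theta>))\<^sup>2) * indicator {0..2*pi} \<theta>" for k \<theta>
  have "B \<ge> 0" using bound[of K] L2T_energy_nonneg[OF F] by (meson order.trans order_refl)
  have "AE \<theta> in lborel. ennreal ((cmod (g \<theta>))\<^sup>2) * indicator {0..2*pi} \<theta> = liminf (\<lambda>k. u k \<theta>)"
  proof (rule AE_mp[OF lim], intro AE_I2 impI)
    fix \<theta> assume L: "\<theta> \<in> {0..2*pi} \<longrightarrow> (\<lambda>k. F k \<theta>) \<longlonglongrightarrow> g \<theta>"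
    show "ennreal ((cmod (g \<theta>))\<^sup>2) * indicator {0..2*pi} \<theta> = liminf (\<lambda>k. u k \<theta>)"
    proof (cases "\<theta> \<in> {0..2*pi}")
      case True
      with L have "(\<lambda>k. ennreal ((cmod (F k \<theta>))\<^sup>2)) \<longlonglongrightarrow> ennreal ((cmod (g \<theta>))\<^sup>2)"
        by (intro tendsto_intros) auto
      from lim_imp_Liminf[OF sequentially_bot this] show ?thesis unfolding u_def using True by simp
    qed (simp add: u_def Liminf_const)
  qed
  then have "(\<integral>\<^sup>+\<theta>. ennreal ((cmod (g \<theta>))\<^sup>2) * indicator {0..2*pi} \<theta> \<partial>lborel)
      = (\<integral>\<^sup>+\<theta>. liminf (\<lambda>k. u k \<theta>) \<partial>lborel)"
    by (rule nn_integral_cong_AE)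
  also have "\<dots> \<le> liminf (\<lambda>k. integral\<^sup>N lborel (u k))"
    by (rule nn_integral_liminf) (simp add: u_def)
  also have "\<dots> \<le> ennreal B"
  proof (rule Liminf_le)
    show "\<forall>\<^sub>F k in sequentially. integral\<^sup>N lborel (u k) \<le> ennreal B"
      using bound unfolding u_def nn_integral_sq_eq_L2T_energy[OF F]
      by (intro eventually_sequentiallyI[of K] ennreal_leI) auto
  qed simp
  finally show "(\<lambda>\<theta>. (cmod (g \<theta>))\<^sup>2) integrable_on {0..2*pi}"
    and "integral {0..2*pi} (\<lambda>\<theta>. (cmod (g \<theta>))\<^sup>2) \<le> B"
    using sq_integrable_if_nn_integral_le[OF _ \<open>B \<ge> 0\<close>] by auto
qed

text \<open>The pointwise series \<open>\<Sum>k. 2^k |F (k+1) - F k|\<^sup>2\<close> has finite integral, so it is finite almost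
  everywhere, and where it is finite the differences \<open>F (k+1) - F k\<close> are summable.\<close>

lemma L2T_ae_convergent_if_fast_cauchy:
  assumes F: "\<And>k. F k \<in> L2T"
    and fast: "summable (\<lambda>k. 2^k * L2T_energy (\<lambda>\<theta>. F (Suc k) \<theta> - F k \<theta>))"
  shows "AE \<theta> in lborel. \<theta> \<in> {0..2*pi} \<longrightarrow> convergent (\<lambda>k. F k \<theta>)"
proof -
  define h where "h k \<theta> = F (Suc k) \<theta> - F k \<theta>" for k \<theta>
  have h: "h k \<in> L2T" for k unfolding h_def by (rule L2T_diff[OF F F])
  have [measurable]: "h k \<in> borel_measurable lborel" for k using h unfolding L2T_def by blast
  define \<phi> where "\<phi> k \<theta> = ennreal (2^k * (cmod (h k \<theta>))\<^sup>2) * indicator {0..2*pi} \<theta>" for k \<theta>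
  have \<phi>_measurable[measurable]: "\<phi> k \<in> borel_measurable lborel" for k unfolding \<phi>_def by measurable
  have \<phi>_integral: "integral\<^sup>N lborel (\<phi> k) = ennreal (2^k * L2T_energy (h k))" for k
    unfolding \<phi>_def
    by (rule nn_integral_has_integral_lebesgue'[OF _ has_integral_mult_right[OF L2T_energy_has_integral[OF h]]])
      simp
  have "(\<integral>\<^sup>+\<theta>. (\<Sum>k. \<phi> k \<theta>) \<partial>lborel) = (\<Sum>k. integral\<^sup>N lborel (\<phi> k))"
    by (rule nn_integral_suminf) simp
  also have "\<dots> = ennreal (\<Sum>k. 2^k * L2T_energy (h k))"
    unfolding \<phi>_integral using fast L2T_energy_nonneg[OF h] unfolding h_def
    by (intro suminf_ennreal2) auto
  finally have "(\<integral>\<^sup>+\<theta>. (\<Sum>k. \<phi> k \<theta>) \<partial>lborel) \<noteq> \<infinity>" by simp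
  then have "AE \<theta> in lborel. (\<Sum>k. \<phi> k \<theta>) \<noteq> \<infinity>"
    by (rule nn_integral_PInf_AE[rotated]) simp
  then show ?thesis
  proof (rule AE_mp, intro AE_I2 impI)
    fix \<theta> assume "\<theta> \<in> {0..2*pi}" and fin: "(\<Sum>k. \<phi> k \<theta>) \<noteq> \<infinity>"
    then have "(\<Sum>k. ennreal (2^k * (cmod (h k \<theta>))\<^sup>2)) \<noteq> top" unfolding \<phi>_def by simp
    then have "summable (\<lambda>k. 2^k * (cmod (h k \<theta>))\<^sup>2)"
      by (rule summable_suminf_not_top[rotated]) simp
    then have "summable (\<lambda>k. h k \<theta>)" by (rule summable_if_summable_pow2_norm_sq)
    then have "convergent (\<lambda>K. \<Sum>k<K. h k \<theta>)" by (simp add: summable_iff_convergent)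
    then have "convergent (\<lambda>K. F 0 \<theta> + (\<Sum>k<K. h k \<theta>))" by (rule convergent_add[OF convergent_const])
    moreover have "F 0 \<theta> + (\<Sum>k<K. h k \<theta>) = F K \<theta>" for K
      unfolding h_def using sum_lessThan_telescope[of "\<lambda>k. F k \<theta>" K] by simp
    ultimately show "convergent (\<lambda>k. F k \<theta>)" by simp
  qed
qed

lemma L2T_energy_trig_poly_diff_le_tail_sum:
  assumes "\<alpha> \<in> ell2" "M \<le> N"
  shows "L2T_energy (\<lambda>\<theta>. trig_poly \<alpha> N \<theta> - trig_poly \<alpha> M \<theta>) \<le> 2*pi * tail_sum (\<lambda>n. (cmod (\<alpha> n))\<^sup>2) M"
  unfolding L2T_energy_trig_poly_diff[OF assms(2)]
  using sum_le_tail_sum[of "\<lambda>n. (cmod (\<alpha> n))\<^sup>2" M N] assms(1) by (simp add: ell2_def)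

lemma trig_poly_subseq_ae_convergent:
  assumes "\<alpha> \<in> ell2" "strict_mono N"
    and tail: "\<And>k. tail_sum (\<lambda>n. (cmod (\<alpha> n))\<^sup>2) (N k) \<le> (1/8)^k"
  shows "AE \<theta> in lborel. \<theta> \<in> {0..2*pi} \<longrightarrow> convergent (\<lambda>k. trig_poly \<alpha> (N k) \<theta>)"
proof (rule L2T_ae_convergent_if_fast_cauchy[OF trig_poly_L2T])
  have fast: "2^k * L2T_energy (\<lambda>\<theta>. trig_poly \<alpha> (N (Suc k)) \<theta> - trig_poly \<alpha> (N k) \<theta>) \<le> 2*pi * (1/4)^k" for k
  proof -
    have "L2T_energy (\<lambda>\<theta>. trig_poly \<alpha> (N (Suc k)) \<theta> - trig_poly \<alpha> (N k) \<theta>)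
        \<le> 2*pi * tail_sum (\<lambda>n. (cmod (\<alpha> n))\<^sup>2) (N k)"
      using strict_mono_less_eq[OF assms(2), of k "Suc k"]
      by (intro L2T_energy_trig_poly_diff_le_tail_sum[OF assms(1)]) simp
    also have "\<dots> \<le> 2*pi * (1/8)^k" using tail[of k] by simp
    finally have "2^k * L2T_energy (\<lambda>\<theta>. trig_poly \<alpha> (N (Suc k)) \<theta> - trig_poly \<alpha> (N k) \<theta>) \<le> 2^k * (2*pi * (1/8)^k)"
      by (rule mult_left_mono) simp
    also have "\<dots> = 2*pi * (1/4)^k" by (simp add: power_divide field_simps flip: power_mult_distrib)
    finally show ?thesis .
  qed
  have "summable (\<lambda>k. 2*pi * (1/4::real)^k)" by (intro summable_mult summable_geometric) simp
  then show "summable (\<lambda>k. 2^k * L2T_energy (\<lambda>\<theta>. trig_poly \<alpha> (N (Suc k)) \<theta> - trig_poly \<alpha> (N k) \<theta>))"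
  proof (rule summable_comparison_test')
    show "norm (2^k * L2T_energy (\<lambda>\<theta>. trig_poly \<alpha> (N (Suc k)) \<theta> - trig_poly \<alpha> (N k) \<theta>)) \<le> 2*pi * (1/4)^k" for k
      using fast[of k] L2T_energy_nonneg[OF L2T_diff[OF trig_poly_L2T trig_poly_L2T]] by simp
  qed
qed

lemma L2T_energy_remainder_le_tail_sum:
  assumes "\<alpha> \<in> ell2" "strict_mono N" and [measurable]: "g \<in> borel_measurable lborel"
    and lim: "AE \<theta> in lborel. \<theta> \<in> {0..2*pi} \<longrightarrow> (\<lambda>k. trig_poly \<alpha> (N k) \<theta>) \<longlonglongrightarrow> g \<theta>"
  shows "(\<lambda>\<theta>. (cmod (g \<theta> - trig_poly \<alpha> M \<theta>))\<^sup>2) integrable_on {0..2*pi}"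
    and "integral {0..2*pi} (\<lambda>\<theta>. (cmod (g \<theta> - trig_poly \<alpha> M \<theta>))\<^sup>2) \<le> 2*pi * tail_sum (\<lambda>n. (cmod (\<alpha> n))\<^sup>2) M"
proof -
  have [measurable]: "trig_poly \<alpha> M \<in> borel_measurable lborel"
    using trig_poly_L2T unfolding L2T_def by blast
  have meas: "(\<lambda>\<theta>. g \<theta> - trig_poly \<alpha> M \<theta>) \<in> borel_measurable lborel" by measurable
  have lim_M: "AE \<theta> in lborel. \<theta> \<in> {0..2*pi} \<longrightarrow>
      (\<lambda>k. trig_poly \<alpha> (N k) \<theta> - trig_poly \<alpha> M \<theta>) \<longlonglongrightarrow> g \<theta> - trig_poly \<alpha> M \<theta>"
    using lim by eventually_elim (auto intro: tendsto_diff)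
  have bound: "L2T_energy (\<lambda>\<theta>. trig_poly \<alpha> (N k) \<theta> - trig_poly \<alpha> M \<theta>)
      \<le> 2*pi * tail_sum (\<lambda>n. (cmod (\<alpha> n))\<^sup>2) M" if "k \<ge> M" for k
    using that seq_suble[OF assms(2), of k] by (intro L2T_energy_trig_poly_diff_le_tail_sum[OF assms(1)]) simp
  show "(\<lambda>\<theta>. (cmod (g \<theta> - trig_poly \<alpha> M \<theta>))\<^sup>2) integrable_on {0..2*pi}"
    and "integral {0..2*pi} (\<lambda>\<theta>. (cmod (g \<theta> - trig_poly \<alpha> M \<theta>))\<^sup>2) \<le> 2*pi * tail_sum (\<lambda>n. (cmod (\<alpha> n))\<^sup>2) M"
    using L2T_energy_le_if_ae_tendsto[where F="\<lambda>k \<theta>. trig_poly \<alpha> (N k) \<theta> - trig_poly \<alpha> M \<theta>",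
        OF L2T_diff[OF trig_poly_L2T trig_poly_L2T] meas lim_M bound]
    by simp_all
qed

text \<open>Riesz--Fischer: along a subsequence of partial sums whose tails decay like \<open>8^-k\<close>, the
  partial sums converge almost everywhere, and Fatou's lemma controls the limit.\<close>

lemma boundary_fun_exists:
  assumes "\<alpha> \<in> ell2"
  obtains g where "boundary_fun \<alpha> g"
proof -
  define a where "a n = (cmod (\<alpha> n))\<^sup>2" for n
  have sa: "summable a" using assms unfolding ell2_def a_def by simp
  obtain N where N: "strict_mono N" "\<And>k. tail_sum a (N k) \<le> (1/8)^k"
    using LIMSEQ_0_imp_subseq_le[OF tail_sum_tendsto_0[OF sa], of "\<lambda>k. (1/8)^k"] by auto
  define g where "g \<theta> = lim (\<lambda>k. trig_poly \<alpha> (N k) \<theta>)" for \<theta>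
  from trig_poly_subseq_ae_convergent[OF assms N[unfolded a_def[abs_def]]]
  have lim: "AE \<theta> in lborel. \<theta> \<in> {0..2*pi} \<longrightarrow> (\<lambda>k. trig_poly \<alpha> (N k) \<theta>) \<longlonglongrightarrow> g \<theta>"
    unfolding g_def by eventually_elim (simp add: convergent_LIMSEQ_iff)
  have [measurable]: "trig_poly \<alpha> n \<in> borel_measurable lborel" for n
    using trig_poly_L2T unfolding L2T_def by blast
  have meas: "g \<in> borel_measurable lborel"
    unfolding g_def by (rule borel_measurable_lim_metric) measurable
  note energy = L2T_energy_remainder_le_tail_sum[OF assms N(1) meas lim, folded a_def[abs_def]]
  have "g (\<theta> + 2*pi) = g \<theta>" for \<theta> unfolding g_def by (simp only: trig_poly_periodic)
  then have g: "g \<in> L2T"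
    using energy(1)[of 0] by (intro L2TI[OF meas]) (simp_all add: trig_poly_def)
  have gM: "(\<lambda>\<theta>. g \<theta> - trig_poly \<alpha> M \<theta>) \<in> L2T" for M by (rule L2T_diff[OF g trig_poly_L2T])
  have bound: "L2T_norm (\<lambda>\<theta>. g \<theta> - trig_poly \<alpha> M \<theta>) \<le> sqrt (tail_sum a M)" for M
    unfolding L2T_norm_eq_energy[OF gM] L2T_energy_def
    using energy(2)[of M] by (intro real_sqrt_le_mono) (simp add: field_simps)
  have "(\<lambda>M. L2T_norm (\<lambda>\<theta>. g \<theta> - trig_poly \<alpha> M \<theta>)) \<longlonglongrightarrow> 0"
  proof (rule tendsto_sandwich[where f="\<lambda>_. 0", OF _ _ tendsto_const])
    show "\<forall>\<^sub>F M in sequentially. 0 \<le> L2T_norm (\<lambda>\<theta>. g \<theta> - trig_poly \<alpha> M \<theta>)"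
      by (simp add: L2T_norm_eq_energy[OF gM] L2T_energy_nonneg[OF gM])
    show "\<forall>\<^sub>F M in sequentially. L2T_norm (\<lambda>\<theta>. g \<theta> - trig_poly \<alpha> M \<theta>) \<le> sqrt (tail_sum a M)"
      using bound by simp
    show "(\<lambda>M. sqrt (tail_sum a M)) \<longlonglongrightarrow> 0"
      using tendsto_real_sqrt[OF tail_sum_tendsto_0[OF sa]] by simp
  qed
  with g show ?thesis using that unfolding boundary_fun_iff by blast
qed

section \<open>Mean Lipschitz smoothness of the boundary function\<close>

lemma translation_weight_nonneg: "translation_weight t n \<ge> 0"
  unfolding translation_weight_def using cos_le_one[of "real n * t"] by simp

lemma translation_weight_le_4: "translation_weight t n \<le> 4"
  unfolding translation_weight_def using cos_ge_minus_one[of "real n * t"] by linarith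

lemma translation_weight_le_sq: "translation_weight t n \<le> (real n * t)\<^sup>2"
proof -
  define x where "x = real n * t"
  have "cos x = 1 - 2 * (sin (x/2))\<^sup>2" using cos_double_sin[of "x/2"] by simp
  moreover have "(sin (x/2))\<^sup>2 \<le> (x/2)\<^sup>2"
    using abs_sin_x_le_abs_x[of "x/2"] by (metis abs_ge_zero power2_abs power_mono)
  ultimately show ?thesis unfolding translation_weight_def x_def[symmetric] by (simp add: power_divide)
qed

lemma translation_weight_ge:
  assumes "1 \<le> real n * t" "real n * t \<le> 2"
  shows "translation_weight t n \<ge> 2 - 2 * cos 1"
  unfolding translation_weight_def using assms pi_ge_two
  by (simp add: cos_monotone_0_pi_le)

lemma summable_translation_sum:
  assumes "summable a" "\<And>n. a n \<ge> 0"
  shows "summable (\<lambda>n. a n * translation_weight t n)"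
proof (rule summable_comparison_test'[OF summable_mult[OF assms(1), of 4]])
  show "norm (a n * translation_weight t n) \<le> 4 * a n" for n
    using mult_left_mono[OF translation_weight_le_4 assms(2)] assms(2)[of n] translation_weight_nonneg[of t n]
    by (simp add: mult.commute)
qed

text \<open>Since \<open>2 - 2 cos(n t) \<ge> 2 - 2 cos 1 > 0\<close> on the block \<open>2^m \<le> n < 2^(m+1)\<close> when \<open>t = 2^-m\<close>,
  the translation by \<open>2^-m\<close> sees the whole \<open>m\<close>-th dyadic block.\<close>

lemma dyadic_block_le_translation_sum:
  assumes "summable (\<lambda>n. a n * translation_weight ((1/2)^m) n)" "\<And>n. a n \<ge> 0"
  shows "dyadic_block a m \<le> (\<Sum>n. a n * translation_weight ((1/2)^m) n) / (2 - 2 * cos 1)"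
proof -
  have "cos (1::real) < 1" using cos_double_less_one[of "1/2"] by simp
  then have c: "2 - 2 * cos (1::real) > 0" by simp
  have "a n * (2 - 2 * cos 1) \<le> a n * translation_weight ((1/2)^m) n" if "n \<in> {2^m..<2^(m+1)}" for n
  proof -
    have "real (2^m) \<le> real n" "real n < real (2^(m+1))" using that by (simp_all only: of_nat_le_iff of_nat_less_iff) auto
    then have "1 \<le> real n * (1/2)^m" "real n * (1/2)^m \<le> 2"
      by (simp_all add: power_one_over field_simps)
    then show ?thesis using assms(2) by (intro mult_left_mono translation_weight_ge) auto
  qed
  then have "dyadic_block a m * (2 - 2 * cos 1) \<le> (\<Sum>n\<in>{2^m..<2^(m+1)}. a n * translation_weight ((1/2)^m) n)"
    unfolding dyadic_block_def sum_distrib_right by (rule sum_mono)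
  also have "\<dots> \<le> (\<Sum>n. a n * translation_weight ((1/2)^m) n)"
    using assms translation_weight_nonneg by (intro sum_le_suminf) auto
  finally show ?thesis using c by (simp add: pos_le_divide_eq)
qed

lemma dyadic_decay_if_small_mean_lip:
  assumes "boundary_fun \<alpha> g" "g \<in> small_mean_lip"
  shows "(\<lambda>n. 2 ^ n * dyadic_block (\<lambda>j. (cmod (\<alpha> j))\<^sup>2) n) \<longlonglongrightarrow> 0"
proof -
  define a where "a n = (cmod (\<alpha> n))\<^sup>2" for n
  define T where "T t = (\<Sum>n. a n * translation_weight t n)" for t
  define L where "L t = L2T_norm (\<lambda>\<theta>. g (\<theta> - t) - g \<theta>) / sqrt \<bar>t\<bar>" for t
  have summable: "summable (\<lambda>n. a n * translation_weight t n)" for t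
    using sums_summable[OF translation_parseval[OF assms(1)]] unfolding a_def .
  have "T t \<ge> 0" for t
    unfolding T_def using summable translation_weight_nonneg by (intro suminf_nonneg) (auto simp: a_def)
  have "(L \<longlongrightarrow> 0) (at 0)" using assms(2) unfolding small_mean_lip_def L_def by blast
  moreover have "filterlim (\<lambda>m. (1/2::real)^m) (at 0) sequentially"
    unfolding filterlim_at by (auto intro: LIMSEQ_realpow_zero)
  ultimately have "(\<lambda>m. L ((1/2)^m)) \<longlonglongrightarrow> 0" by (rule filterlim_compose)
  then have "(\<lambda>m. (L ((1/2)^m))\<^sup>2) \<longlonglongrightarrow> 0" using tendsto_power[of _ 0 _ 2] by fastforce
  moreover have "(L ((1/2)^m))\<^sup>2 = 2^m * T ((1/2)^m)" for m
  proof -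
    have "L t = sqrt (T t) / sqrt \<bar>t\<bar>" for t
      unfolding L_def L2T_norm_translate_diff[OF assms(1)] T_def a_def ..
    then have "(L ((1/2)^m))\<^sup>2 = T ((1/2)^m) / (1/2)^m"
      using \<open>\<And>t. T t \<ge> 0\<close> by (simp add: power_divide)
    then show ?thesis by (simp add: power_one_over)
  qed
  moreover have "cos (1::real) \<noteq> 1" using cos_double_less_one[of "1/2"] by simp
  ultimately have lim: "(\<lambda>m. 2^m * T ((1/2)^m) / (2 - 2 * cos 1)) \<longlonglongrightarrow> 0"
    using tendsto_divide[OF _ tendsto_const, of _ 0 _ "2 - 2 * cos (1::real)"] by simp
  show ?thesis
  proof (rule tendsto_sandwich[where f="\<lambda>_. 0", OF _ _ tendsto_const lim])
    show "\<forall>\<^sub>F m in sequentially. 0 \<le> 2 ^ m * dyadic_block (\<lambda>j. (cmod (\<alpha> j))\<^sup>2) m"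
      by (simp add: dyadic_block_def sum_nonneg)
    have "dyadic_block a m \<le> T ((1/2)^m) / (2 - 2 * cos 1)" for m
      unfolding T_def by (rule dyadic_block_le_translation_sum[OF summable]) (simp add: a_def)
    then have "2 ^ m * dyadic_block a m \<le> 2^m * (T ((1/2)^m) / (2 - 2 * cos 1))" for m
      by (intro mult_left_mono) simp_all
    then show "\<forall>\<^sub>F m in sequentially. 2 ^ m * dyadic_block (\<lambda>j. (cmod (\<alpha> j))\<^sup>2) m
        \<le> 2^m * T ((1/2)^m) / (2 - 2 * cos 1)"
      unfolding a_def[abs_def] by simp
  qed
qed

lemma sum_mult_sq_le_tail_bound:
  fixes a :: "nat \<Rightarrow> real"
  assumes sa: "summable a" and a0: "\<And>k. a k \<ge> 0"
    and E: "\<And>k. (real k + 1) * tail_sum a k \<le> E"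
    and eps: "\<And>k. k \<ge> M \<Longrightarrow> (real k + 1) * tail_sum a k \<le> \<epsilon>"
    and "M \<le> N"
  shows "(\<Sum>n<N. a n * (real n)\<^sup>2) \<le> 2 * real M * E + 2 * \<epsilon> * real N"
proof -
  define \<tau> where "\<tau> = tail_sum a"
  have \<tau>0: "\<tau> k \<ge> 0" for k unfolding \<tau>_def by (rule tail_sum_nonneg[OF sa a0])
  have "0 \<le> (real M + 1) * \<tau> M" using \<tau>0[of M] by simp
  then have "\<epsilon> \<ge> 0" using eps[of M] unfolding \<tau>_def by linarith
  have step: "((real (Suc k))\<^sup>2 - (real k)\<^sup>2) * \<tau> (Suc k) \<le> (if k < M then 2 * E else 0) + 2 * \<epsilon>" for k
  proof -
    have "((real (Suc k))\<^sup>2 - (real k)\<^sup>2) * \<tau> (Suc k) \<le> 2 * ((real (Suc k) + 1) * \<tau> (Suc k))"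
      using \<tau>0[of "Suc k"] by (simp add: power2_eq_square algebra_simps mult_right_mono)
    then show ?thesis
      using E[of "Suc k"] eps[of "Suc k"] \<open>\<epsilon> \<ge> 0\<close> unfolding \<tau>_def by (cases "k < M") auto
  qed
  have a_eq: "a k = \<tau> k - \<tau> (Suc k)" for k unfolding \<tau>_def using tail_sum_Suc[OF sa, of k] by simp
  have "(\<Sum>n<N. a n * (real n)\<^sup>2) \<le> (\<Sum>k\<in>{0..<N}. (\<tau> k - \<tau> (Suc k)) * (real k)\<^sup>2) + (real N)\<^sup>2 * \<tau> N"
    using \<tau>0[of N] unfolding a_eq by (simp add: atLeast0LessThan)
  also have "\<dots> = (\<Sum>k\<in>{0..<N}. ((real (Suc k))\<^sup>2 - (real k)\<^sup>2) * \<tau> (Suc k))"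
    using summation_by_parts[of 0 N \<tau> "\<lambda>k. (real k)\<^sup>2"] by simp
  also have "\<dots> \<le> (\<Sum>k\<in>{0..<N}. (if k < M then 2 * E else 0) + 2 * \<epsilon>)"
    by (rule sum_mono) (rule step)
  also have "\<dots> = 2 * real M * E + 2 * \<epsilon> * real N"
  proof -
    have "{0..<N} \<inter> {k. k < M} = {0..<M}" using \<open>M \<le> N\<close> by auto
    then show ?thesis by (simp add: sum.distrib sum.If_cases)
  qed
  finally show ?thesis .
qed

lemma translation_sum_tail_le:
  fixes a :: "nat \<Rightarrow> real"
  assumes sa: "summable a" and a0: "\<And>k. a k \<ge> 0"
  shows "(\<Sum>i. a (i + N) * translation_weight t (i + N)) \<le> 4 * tail_sum a N"
proof -
  have "(\<Sum>i. a (i + N) * translation_weight t (i + N)) \<le> (\<Sum>i. 4 * a (i + N))"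
  proof (rule suminf_le)
    show "a (i + N) * translation_weight t (i + N) \<le> 4 * a (i + N)" for i
      using mult_left_mono[OF translation_weight_le_4[of t "i + N"] a0[of "i + N"]] by linarith
    show "summable (\<lambda>i. a (i + N) * translation_weight t (i + N))"
      using summable_ignore_initial_segment[OF summable_translation_sum[OF sa a0], of N] .
    show "summable (\<lambda>i. 4 * a (i + N))"
      using summable_mult[OF summable_ignore_initial_segment[OF sa, of N]] .
  qed
  also have "\<dots> = 4 * tail_sum a N"
    unfolding tail_sum_def using suminf_mult[OF summable_ignore_initial_segment[OF sa, of N], of 4] by simp
  finally show ?thesis .
qed

text \<open>Low frequencies \<open>n \<le> 1/|t|\<close> are controlled by \<open>2 - 2 cos (n t) \<le> (n t)\<^sup>2\<close>, high ones by
  \<open>2 - 2 cos (n t) \<le> 4\<close> and the tail sum at \<open>1/|t|\<close>.\<close>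

lemma translation_sum_div_abs_le_tail_bound:
  fixes a :: "nat \<Rightarrow> real"
  assumes sa: "summable a" and a0: "\<And>k. a k \<ge> 0"
    and E: "\<And>k. (real k + 1) * tail_sum a k \<le> E"
    and eps: "\<And>k. k \<ge> M \<Longrightarrow> (real k + 1) * tail_sum a k \<le> \<epsilon>"
    and t: "0 < \<bar>t\<bar>" "\<bar>t\<bar> \<le> 1" "real M \<le> 1 / \<bar>t\<bar>"
  shows "(\<Sum>n. a n * translation_weight t n) / \<bar>t\<bar> \<le> 2 * real M * E * \<bar>t\<bar> + 6 * \<epsilon>"
proof -
  define N where "N = nat \<lfloor>1 / \<bar>t\<bar>\<rfloor>"
  have "1 / \<bar>t\<bar> \<ge> 1" using t by (simp add: field_simps)
  then have "real N \<le> 1 / \<bar>t\<bar>" "1 / \<bar>t\<bar> < real N + 1" "M \<le> N"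
    unfolding N_def using t(3) by linarith+
  then have N1: "real N * \<bar>t\<bar> \<le> 1" and N2: "1 < (real N + 1) * \<bar>t\<bar>"
    using t(1) by (simp_all add: field_simps)
  have "0 \<le> (real M + 1) * tail_sum a M" using tail_sum_nonneg[OF sa a0, of M] by simp
  then have "\<epsilon> \<ge> 0" using eps[of M] by linarith
  have tail: "(\<Sum>i. a (i + N) * translation_weight t (i + N)) \<le> 4 * \<epsilon> * \<bar>t\<bar>"
  proof -
    have "(real N + 1) * tail_sum a N * 1 \<le> \<epsilon> * ((real N + 1) * \<bar>t\<bar>)"
      using eps[OF \<open>M \<le> N\<close>] N2 \<open>\<epsilon> \<ge> 0\<close> tail_sum_nonneg[OF sa a0, of N] by (intro mult_mono) auto
    then have "(real N + 1) * tail_sum a N \<le> (real N + 1) * (\<epsilon> * \<bar>t\<bar>)" by (simp add: algebra_simps)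
    then have "tail_sum a N \<le> \<epsilon> * \<bar>t\<bar>" by (rule mult_left_le_imp_le) simp
    then show ?thesis using translation_sum_tail_le[OF sa a0, of N t] by simp
  qed
  have head: "(\<Sum>n<N. a n * translation_weight t n) \<le> 2 * real M * E * t\<^sup>2 + 2 * \<epsilon> * \<bar>t\<bar>"
  proof -
    have "(\<Sum>n<N. a n * translation_weight t n) \<le> (\<Sum>n<N. a n * (real n * t)\<^sup>2)"
      by (intro sum_mono mult_left_mono[OF translation_weight_le_sq a0])
    also have "\<dots> = t\<^sup>2 * (\<Sum>n<N. a n * (real n)\<^sup>2)"
      by (simp add: sum_distrib_left power_mult_distrib algebra_simps)
    also have "\<dots> \<le> t\<^sup>2 * (2 * real M * E + 2 * \<epsilon> * real N)"
      by (intro mult_left_mono sum_mult_sq_le_tail_bound[OF sa a0 E eps \<open>M \<le> N\<close>]) simp_all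
    also have "\<dots> \<le> 2 * real M * E * t\<^sup>2 + 2 * \<epsilon> * \<bar>t\<bar>"
      using mult_left_mono[OF mult_right_mono[OF N1, of "\<bar>t\<bar>"], of "2 * \<epsilon>"] \<open>\<epsilon> \<ge> 0\<close>
      by (simp add: power2_eq_square algebra_simps)
    finally show ?thesis .
  qed
  have "(\<Sum>n. a n * translation_weight t n) \<le> (2 * real M * E * \<bar>t\<bar> + 6 * \<epsilon>) * \<bar>t\<bar>"
    using suminf_split_initial_segment[OF summable_translation_sum[OF sa a0], of t N] tail head
    by (simp add: power2_eq_square algebra_simps)
  then show ?thesis using t(1) by (simp add: divide_le_eq)
qed

lemma translation_sum_div_abs_le:
  fixes a :: "nat \<Rightarrow> real"
  assumes sa: "summable a" and a0: "\<And>k. a k \<ge> 0"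
    and E: "\<And>k. (real k + 1) * tail_sum a k \<le> E" and "t \<noteq> 0"
  shows "(\<Sum>n. a n * translation_weight t n) / \<bar>t\<bar> \<le> 6 * E + 4 * suminf a"
proof -
  define T where "T = (\<Sum>n. a n * translation_weight t n)"
  have "E \<ge> 0" using E[of 0] tail_sum_nonneg[OF sa a0, of 0] by simp
  have "suminf a \<ge> 0" using sa a0 by (rule suminf_nonneg)
  show ?thesis
  proof (cases "\<bar>t\<bar> \<le> 1")
    case True
    have "T / \<bar>t\<bar> \<le> 2 * real 0 * E * \<bar>t\<bar> + 6 * E"
      unfolding T_def
      by (rule translation_sum_div_abs_le_tail_bound[OF sa a0 E E]) (use \<open>t \<noteq> 0\<close> True in auto)
    then show ?thesis using \<open>suminf a \<ge> 0\<close> unfolding T_def by simp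
  next
    case False
    have "T \<le> (\<Sum>n. 4 * a n)"
      unfolding T_def
    proof (rule suminf_le)
      show "a n * translation_weight t n \<le> 4 * a n" for n
        using mult_left_mono[OF translation_weight_le_4[of t n] a0[of n]] by linarith
    qed (use summable_translation_sum[OF sa a0] summable_mult[OF sa] in auto)
    also have "\<dots> = 4 * suminf a" by (rule suminf_mult[OF sa])
    finally have "T \<le> 4 * suminf a" .
    moreover have "T \<ge> 0"
      unfolding T_def using a0 translation_weight_nonneg
      by (intro suminf_nonneg summable_translation_sum[OF sa a0]) simp
    then have "T / \<bar>t\<bar> \<le> T" using False by (simp add: divide_le_eq mult_le_cancel_left1)
    ultimately show ?thesis using \<open>E \<ge> 0\<close> unfolding T_def by linarith
  qed
qed

lemma translation_sum_div_abs_tendsto_0: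
  fixes a :: "nat \<Rightarrow> real"
  assumes sa: "summable a" and a0: "\<And>k. a k \<ge> 0"
    and decay: "(\<lambda>k. (real k + 1) * tail_sum a k) \<longlonglongrightarrow> 0"
  shows "((\<lambda>t. (\<Sum>n. a n * translation_weight t n) / \<bar>t\<bar>) \<longlongrightarrow> 0) (at 0)"
proof (rule LIM_I)
  fix e :: real assume "e > 0"
  obtain E where E: "\<And>k. (real k + 1) * tail_sum a k \<le> E"
    using decay[THEN convergent_imp_Bseq[OF convergentI]] unfolding Bseq_def
    by (metis abs_le_D1 real_norm_def)
  have "E \<ge> 0" using E[of 0] tail_sum_nonneg[OF sa a0, of 0] by simp
  define \<epsilon> where "\<epsilon> = e / 12"
  have "\<epsilon> > 0" unfolding \<epsilon>_def using \<open>e > 0\<close> by simp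
  then obtain M where M: "\<And>k. k \<ge> M \<Longrightarrow> \<bar>(real k + 1) * tail_sum a k\<bar> < \<epsilon>"
    using LIMSEQ_D[OF decay] by fastforce
  have eps: "(real k + 1) * tail_sum a k \<le> \<epsilon>" if "k \<ge> M" for k
    using M[OF that] by (simp add: abs_less_iff)
  define s where "s = min (1 / (real M + 1)) (e / (4 * real M * E + 1))"
  have "s > 0" unfolding s_def using \<open>e > 0\<close> \<open>E \<ge> 0\<close> by (simp add: add_nonneg_pos)
  moreover have "\<bar>(\<Sum>n. a n * translation_weight t n) / \<bar>t\<bar>\<bar> < e" if "t \<noteq> 0" "\<bar>t\<bar> < s" for t
  proof -
    have small: "\<bar>t\<bar> * (real M + 1) < 1" using that(2) unfolding s_def by (simp add: field_simps)
    have "\<bar>t\<bar> \<le> \<bar>t\<bar> * (real M + 1)" by (simp add: algebra_simps)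
    then have t: "0 < \<bar>t\<bar>" "\<bar>t\<bar> \<le> 1" "real M \<le> 1 / \<bar>t\<bar>"
      using small that(1) by (simp, linarith, simp add: field_simps)
    have "(\<Sum>n. a n * translation_weight t n) / \<bar>t\<bar> \<le> 2 * real M * E * \<bar>t\<bar> + 6 * \<epsilon>"
      by (rule translation_sum_div_abs_le_tail_bound[OF sa a0 E eps t])
    moreover have "4 * real M * E * \<bar>t\<bar> < e"
    proof -
      have "4 * real M * E * \<bar>t\<bar> \<le> 4 * real M * E * (e / (4 * real M * E + 1))"
        using that \<open>E \<ge> 0\<close> unfolding s_def by (intro mult_left_mono) auto
      also have "\<dots> < e"
      proof -
        have "0 \<le> 4 * real M * E" using \<open>E \<ge> 0\<close> by simp
        then have d: "0 < 4 * real M * E + 1" by linarith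
        show ?thesis unfolding times_divide_eq_right pos_divide_less_eq[OF d]
          using \<open>e > 0\<close> by (simp add: algebra_simps)
      qed
      finally show ?thesis .
    qed
    ultimately have "(\<Sum>n. a n * translation_weight t n) / \<bar>t\<bar> < e" unfolding \<epsilon>_def by linarith
    moreover have "0 \<le> (\<Sum>n. a n * translation_weight t n)"
      using a0 translation_weight_nonneg by (intro suminf_nonneg summable_translation_sum[OF sa a0]) simp
    ultimately show ?thesis by simp
  qed
  ultimately show "\<exists>s>0. \<forall>t. t \<noteq> 0 \<and> norm (t - 0) < s \<longrightarrow>
      norm ((\<Sum>n. a n * translation_weight t n) / \<bar>t\<bar> - 0) < e"
    by auto
qed

lemma small_mean_lip_if_tail_decay:
  assumes "boundary_fun \<alpha> g" "\<alpha> \<in> ell2"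
    and decay: "(\<lambda>k. (real k + 1) * tail_sum (\<lambda>n. (cmod (\<alpha> n))\<^sup>2) k) \<longlonglongrightarrow> 0"
  shows "g \<in> small_mean_lip"
proof -
  define a where "a n = (cmod (\<alpha> n))\<^sup>2" for n
  have sa: "summable a" using assms(2) unfolding ell2_def a_def by simp
  have a0: "a k \<ge> 0" for k unfolding a_def by simp
  have decay_a: "(\<lambda>k. (real k + 1) * tail_sum a k) \<longlonglongrightarrow> 0" using decay unfolding a_def[abs_def] .
  obtain E where E: "\<And>k. (real k + 1) * tail_sum a k \<le> E"
    using decay_a[THEN convergent_imp_Bseq[OF convergentI]] unfolding Bseq_def
    by (metis abs_le_D1 real_norm_def)
  have eq: "L2T_norm (\<lambda>\<theta>. g (\<theta> - t) - g \<theta>) / sqrt \<bar>t\<bar>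
      = sqrt ((\<Sum>n. a n * translation_weight t n) / \<bar>t\<bar>)" for t
    unfolding L2T_norm_translate_diff[OF assms(1)] a_def real_sqrt_divide ..
  have "g \<in> L2T" using assms(1) unfolding boundary_fun_def by blast
  moreover have "L2T_norm (\<lambda>\<theta>. g (\<theta> - t) - g \<theta>) / sqrt \<bar>t\<bar> \<le> sqrt (6 * E + 4 * suminf a)"
    if "t \<noteq> 0" for t
    unfolding eq by (rule real_sqrt_le_mono[OF translation_sum_div_abs_le[OF sa a0 E that]])
  moreover have "((\<lambda>t. L2T_norm (\<lambda>\<theta>. g (\<theta> - t) - g \<theta>) / sqrt \<bar>t\<bar>) \<longlongrightarrow> 0) (at 0)"
    unfolding eq using tendsto_real_sqrt[OF translation_sum_div_abs_tendsto_0[OF sa a0 decay_a]] by simp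
  ultimately show ?thesis unfolding small_mean_lip_def by blast
qed

theorem theorem1p2:
  fixes \<alpha> :: "nat \<Rightarrow> complex"
  assumes "\<alpha> \<in> ell2"
  shows "(compact_op_ell2 (rhaly \<alpha>) \<longleftrightarrow> (\<exists>g. boundary_fun \<alpha> g \<and> g \<in> small_mean_lip))
       \<and> ((\<exists>g. boundary_fun \<alpha> g \<and> g \<in> small_mean_lip) \<longleftrightarrow>
          (\<lambda>n. 2 ^ n * (\<Sum>j\<in>{2^n..<2^(n+1)}. (cmod (\<alpha> j))\<^sup>2)) \<longlonglongrightarrow> (0::real))"
proof -
  define a where "a = (\<lambda>j. (cmod (\<alpha> j))\<^sup>2)"
  have sa: "summable a" and a0: "\<And>k. a k \<ge> 0" using assms unfolding ell2_def a_def by auto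
  have tail_iff: "(\<lambda>k. (real k + 1) * tail_sum a k) \<longlonglongrightarrow> 0 \<longleftrightarrow> (\<lambda>n. 2 ^ n * dyadic_block a n) \<longlonglongrightarrow> 0"
    using dyadic_decay_if_tail_decay[OF sa a0] tail_decay_if_dyadic_decay[OF sa a0] by blast
  have compact_iff: "compact_op_ell2 (rhaly \<alpha>) \<longleftrightarrow> (\<lambda>n. 2 ^ n * dyadic_block a n) \<longlonglongrightarrow> 0"
    using dyadic_decay_if_compact_op_rhaly compact_op_rhaly_if_tail_decay[OF assms] tail_iff
    unfolding a_def by blast
  have lip_iff: "(\<exists>g. boundary_fun \<alpha> g \<and> g \<in> small_mean_lip) \<longleftrightarrow> (\<lambda>n. 2 ^ n * dyadic_block a n) \<longlonglongrightarrow> 0"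
  proof
    assume "\<exists>g. boundary_fun \<alpha> g \<and> g \<in> small_mean_lip"
    then show "(\<lambda>n. 2 ^ n * dyadic_block a n) \<longlonglongrightarrow> 0"
      using dyadic_decay_if_small_mean_lip unfolding a_def by blast
  next
    assume "(\<lambda>n. 2 ^ n * dyadic_block a n) \<longlonglongrightarrow> 0"
    then have "(\<lambda>k. (real k + 1) * tail_sum a k) \<longlonglongrightarrow> 0" using tail_iff by blast
    moreover obtain g where "boundary_fun \<alpha> g" using boundary_fun_exists[OF assms] .
    ultimately show "\<exists>g. boundary_fun \<alpha> g \<and> g \<in> small_mean_lip"
      using small_mean_lip_if_tail_decay[OF _ assms] unfolding a_def by blast
  qed
  show ?thesis using compact_iff lip_iff unfolding dyadic_block_def a_def by blast
qed

end
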